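(* Let $\Lambda$ be a finite $k$-graph without sources and let $C$ be a positive component which is $F$-harmonic for some well chosen sequence $F$. Then $C$ is $\tilde F$-harmonic for every well chosen sequence $\tilde F$, and $x_F^C=x_{\tilde F}^C$.
   Context: A $k$-graph $(\Lambda,d)$ is a countable small category with functor $d:\Lambda\to\mathbb N^k$ having the unique factorisation property (for $d(\lambda)=m+n$ there are unique $\mu,\nu$ with $d(\mu)=m,d(\nu)=n,\lambda=\mu\nu$). $\Lambda^0=d^{-1}(0)$ are the vertices, $\Lambda^n=d^{-1}(n)$, $r,s$ range and source, $v\Lambda^nw=\{\lambda\in\Lambda^n:r(\lambda)=v,s(\lambda)=w\}$, $v\Lambda w=\bigcup_nv\Lambda^nw$, and for $V,W\subseteq\Lambda^0$, $V\Lambda W=\bigcup_{v\in V,w\in W}v\Lambda w$. Finite: each $\Lambda^n$ finite; without sources: $v\Lambda^n\neq\emptyset$ for all $v,n$. Vertex matrices $A_i(v,w)=|v\Lambda^{e_i}w|$, $A^n=\prod_iA_i^{n_i}$. Define $v\le w$ iff $v\Lambda w\ne\emptyset$ and $v\sim w$ iff $v\le w$ and $w\le v$; the classes are components. A component $C$ is trivial if $C\Lambda C=\{v\}$ for a single vertex, non-trivial otherwise; positive if $\rho(A_i^C)>0$ for all $i$. $\overline V=\{w\in\Lambda^0:w\Lambda V\ne\emptyset\}$. For a matrix $B$ and $R,S\subseteq\Lambda^0$, $B^{R,S}$ is the submatrix with rows $R$, columns $S$, $B^S=B^{S,S}$; $\rho$ is spectral radius. For a finite sequence $F=(a_1,\dots,a_m)$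 in $\mathbb N^k\setminus\{0\}$ (repetitions allowed), $A_F=\sum_jA^{a_j}$; $F$ is well chosen if $A_F(v,w)>0$ iff $v\Lambda^lw\ne\emptyset$ for some $l\ne0$. A non-trivial component $C$ is $F$-harmonic if $\overline C\setminus C=\emptyset$ or $\rho(A_F^C)>\rho(A_F^{\overline C\setminus C})$. For an $F$-harmonic $C$, $x_F^C$ is the unique vector in $[0,\infty)^{\Lambda^0}$ of unit $1$-norm with $A_Fx_F^C=\rho(A_F^C)x_F^C$ and $(x_F^C)_v=0$ for $v\notin\overline C$. *)

theory Defs
  imports Complex_Main "HOL-Library.Countable_Set"
begin

text \<open>Degrees: elements of N^k are represented as functions nat => nat vanishing
  from index k on.  A k-graph is given by its set of morphisms L, range r, source s,
  composition cmp (cmp mu nu is defined, i.e. meaningful, when s mu = r nu), and the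
  degree functor d.  Objects are identified with identity morphisms.\<close>

definition degs :: "nat \<Rightarrow> (nat \<Rightarrow> nat) set" where
  "degs k = {n. \<forall>i\<ge>k. n i = 0}"

definition unitdeg :: "nat \<Rightarrow> nat \<Rightarrow> nat" where
  "unitdeg i = (\<lambda>j. if j = i then 1 else 0)"

definition kgraph :: "nat \<Rightarrow> 'a set \<Rightarrow> ('a \<Rightarrow> 'a) \<Rightarrow> ('a \<Rightarrow> 'a)
    \<Rightarrow> ('a \<Rightarrow> 'a \<Rightarrow> 'a) \<Rightarrow> ('a \<Rightarrow> nat \<Rightarrow> nat) \<Rightarrow> bool" where
  "kgraph k L r s cmp d \<longleftrightarrow>
     countable L \<and>
     (\<forall>l\<in>L. r l \<in> L \<and> s l \<in> L \<and> d l \<in> degs k) \<and>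
     (\<forall>l\<in>L. r (r l) = r l \<and> s (r l) = r l \<and> r (s l) = s l \<and> s (s l) = s l) \<and>
     (\<forall>l\<in>L. cmp (r l) l = l \<and> cmp l (s l) = l) \<and>
     (\<forall>m\<in>L. \<forall>n\<in>L. s m = r n \<longrightarrow>
        cmp m n \<in> L \<and> r (cmp m n) = r m \<and> s (cmp m n) = s n) \<and>
     (\<forall>a\<in>L. \<forall>b\<in>L. \<forall>c\<in>L. s a = r b \<and> s b = r c \<longrightarrow>
        cmp (cmp a b) c = cmp a (cmp b c)) \<and>
     (\<forall>l\<in>L. d (r l) = (\<lambda>_. 0)) \<and>
     (\<forall>m\<in>L. \<forall>n\<in>L. s m = r n \<longrightarrow> d (cmp m n) = (\<lambda>i. d m i + d n i)) \<and>
     (\<forall>l\<in>L. \<forall>m n. d l = (\<lambda>i. m i + n i) \<longrightarrow>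
        (\<exists>!p. fst p \<in> L \<and> snd p \<in> L \<and> s (fst p) = r (snd p) \<and>
              d (fst p) = m \<and> d (snd p) = n \<and> l = cmp (fst p) (snd p)))"

definition paths_deg :: "'a set \<Rightarrow> ('a \<Rightarrow> nat \<Rightarrow> nat) \<Rightarrow> (nat \<Rightarrow> nat) \<Rightarrow> 'a set" where
  "paths_deg L d n = {l\<in>L. d l = n}"

definition verts :: "'a set \<Rightarrow> ('a \<Rightarrow> nat \<Rightarrow> nat) \<Rightarrow> 'a set" where
  "verts L d = paths_deg L d (\<lambda>_. 0)"

definition finite_kgraph :: "'a set \<Rightarrow> ('a \<Rightarrow> nat \<Rightarrow> nat) \<Rightarrow> bool" where
  "finite_kgraph L d \<longleftrightarrow> (\<forall>n. finite (paths_deg L d n))"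

definition no_sources :: "nat \<Rightarrow> 'a set \<Rightarrow> ('a \<Rightarrow> 'a) \<Rightarrow> ('a \<Rightarrow> nat \<Rightarrow> nat) \<Rightarrow> bool" where
  "no_sources k L r d \<longleftrightarrow>
     (\<forall>v\<in>verts L d. \<forall>n\<in>degs k. {l\<in>paths_deg L d n. r l = v} \<noteq> {})"

text \<open>Matrices indexed by vertices: functions, only entries on the vertex set matter.\<close>
definition mmult :: "'a set \<Rightarrow> ('a \<Rightarrow> 'a \<Rightarrow> real) \<Rightarrow> ('a \<Rightarrow> 'a \<Rightarrow> real) \<Rightarrow> 'a \<Rightarrow> 'a \<Rightarrow> real" where
  "mmult V B C = (\<lambda>v w. \<Sum>u\<in>V. B v u * C u w)"

definition mone :: "'a \<Rightarrow> 'a \<Rightarrow> real" where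
  "mone = (\<lambda>v w. if v = w then 1 else 0)"

fun mpow :: "'a set \<Rightarrow> ('a \<Rightarrow> 'a \<Rightarrow> real) \<Rightarrow> nat \<Rightarrow> 'a \<Rightarrow> 'a \<Rightarrow> real" where
  "mpow V B 0 = mone"
| "mpow V B (Suc n) = mmult V (mpow V B n) B"

definition vmat :: "'a set \<Rightarrow> ('a \<Rightarrow> 'a) \<Rightarrow> ('a \<Rightarrow> 'a) \<Rightarrow> ('a \<Rightarrow> nat \<Rightarrow> nat)
    \<Rightarrow> nat \<Rightarrow> 'a \<Rightarrow> 'a \<Rightarrow> real" where
  "vmat L r s d i = (\<lambda>v w. real (card {l\<in>paths_deg L d (unitdeg i). r l = v \<and> s l = w}))"

definition vmat_pow :: "nat \<Rightarrow> 'a set \<Rightarrow> ('a \<Rightarrow> 'a) \<Rightarrow> ('a \<Rightarrow> 'a) \<Rightarrow> ('a \<Rightarrow> nat \<Rightarrow> nat)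
    \<Rightarrow> (nat \<Rightarrow> nat) \<Rightarrow> 'a \<Rightarrow> 'a \<Rightarrow> real" where
  "vmat_pow k L r s d n =
     foldr (\<lambda>i M. mmult (verts L d) (mpow (verts L d) (vmat L r s d i) (n i)) M) [0..<k] mone"

definition AF :: "nat \<Rightarrow> 'a set \<Rightarrow> ('a \<Rightarrow> 'a) \<Rightarrow> ('a \<Rightarrow> 'a) \<Rightarrow> ('a \<Rightarrow> nat \<Rightarrow> nat)
    \<Rightarrow> (nat \<Rightarrow> nat) list \<Rightarrow> 'a \<Rightarrow> 'a \<Rightarrow> real" where
  "AF k L r s d F = (\<lambda>v w. \<Sum>a\<leftarrow>F. vmat_pow k L r s d a v w)"

definition well_chosen :: "nat \<Rightarrow> 'a set \<Rightarrow> ('a \<Rightarrow> 'a) \<Rightarrow> ('a \<Rightarrow> 'a) \<Rightarrow> ('a \<Rightarrow> nat \<Rightarrow> nat)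
    \<Rightarrow> (nat \<Rightarrow> nat) list \<Rightarrow> bool" where
  "well_chosen k L r s d F \<longleftrightarrow>
     (\<forall>a\<in>set F. a \<in> degs k \<and> a \<noteq> (\<lambda>_. 0)) \<and>
     (\<forall>v\<in>verts L d. \<forall>w\<in>verts L d.
        AF k L r s d F v w > 0 \<longleftrightarrow>
        (\<exists>l\<in>degs k. l \<noteq> (\<lambda>_. 0) \<and> {p\<in>paths_deg L d l. r p = v \<and> s p = w} \<noteq> {}))"

text \<open>Spectral radius of the submatrix B^S (S finite): largest modulus of a complex
  eigenvalue of B^S (0 if there is none, i.e. S empty).\<close>
definition eigvals :: "'a set \<Rightarrow> ('a \<Rightarrow> 'a \<Rightarrow> real) \<Rightarrow> complex set" where
  "eigvals S B = {\<mu>. \<exists>x::'a \<Rightarrow> complex. (\<exists>v\<in>S. x v \<noteq> 0) \<and>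
       (\<forall>v\<in>S. (\<Sum>w\<in>S. complex_of_real (B v w) * x w) = \<mu> * x v)}"

definition spec_rad :: "'a set \<Rightarrow> ('a \<Rightarrow> 'a \<Rightarrow> real) \<Rightarrow> real" where
  "spec_rad S B = Sup (insert 0 (cmod ` eigvals S B))"

definition vle :: "'a set \<Rightarrow> ('a \<Rightarrow> 'a) \<Rightarrow> ('a \<Rightarrow> 'a) \<Rightarrow> 'a \<Rightarrow> 'a \<Rightarrow> bool" where
  "vle L r s v w \<longleftrightarrow> (\<exists>l\<in>L. r l = v \<and> s l = w)"

definition vsim :: "'a set \<Rightarrow> ('a \<Rightarrow> 'a) \<Rightarrow> ('a \<Rightarrow> 'a) \<Rightarrow> 'a \<Rightarrow> 'a \<Rightarrow> bool" where
  "vsim L r s v w \<longleftrightarrow> vle L r s v w \<and> vle L r s w v"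

definition is_component :: "'a set \<Rightarrow> ('a \<Rightarrow> 'a) \<Rightarrow> ('a \<Rightarrow> 'a) \<Rightarrow> ('a \<Rightarrow> nat \<Rightarrow> nat)
    \<Rightarrow> 'a set \<Rightarrow> bool" where
  "is_component L r s d C \<longleftrightarrow>
     (\<exists>v\<in>verts L d. C = {w\<in>verts L d. vsim L r s v w})"

definition trivial_comp :: "'a set \<Rightarrow> ('a \<Rightarrow> 'a) \<Rightarrow> ('a \<Rightarrow> 'a) \<Rightarrow> 'a set \<Rightarrow> bool" where
  "trivial_comp L r s C \<longleftrightarrow> (\<exists>v. {l\<in>L. r l \<in> C \<and> s l \<in> C} = {v})"

definition positive_comp :: "nat \<Rightarrow> 'a set \<Rightarrow> ('a \<Rightarrow> 'a) \<Rightarrow> ('a \<Rightarrow> 'a) \<Rightarrow> ('a \<Rightarrow> nat \<Rightarrow> nat)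
    \<Rightarrow> 'a set \<Rightarrow> bool" where
  "positive_comp k L r s d C \<longleftrightarrow> (\<forall>i<k. spec_rad C (vmat L r s d i) > 0)"

definition vclosure :: "'a set \<Rightarrow> ('a \<Rightarrow> 'a) \<Rightarrow> ('a \<Rightarrow> 'a) \<Rightarrow> ('a \<Rightarrow> nat \<Rightarrow> nat)
    \<Rightarrow> 'a set \<Rightarrow> 'a set" where
  "vclosure L r s d V = {w\<in>verts L d. \<exists>l\<in>L. r l = w \<and> s l \<in> V}"

definition harmonic :: "nat \<Rightarrow> 'a set \<Rightarrow> ('a \<Rightarrow> 'a) \<Rightarrow> ('a \<Rightarrow> 'a) \<Rightarrow> ('a \<Rightarrow> nat \<Rightarrow> nat)
    \<Rightarrow> (nat \<Rightarrow> nat) list \<Rightarrow> 'a set \<Rightarrow> bool" where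
  "harmonic k L r s d F C \<longleftrightarrow>
     \<not> trivial_comp L r s C \<and>
     (vclosure L r s d C - C = {} \<or>
      spec_rad C (AF k L r s d F) > spec_rad (vclosure L r s d C - C) (AF k L r s d F))"

definition is_harm_vec :: "nat \<Rightarrow> 'a set \<Rightarrow> ('a \<Rightarrow> 'a) \<Rightarrow> ('a \<Rightarrow> 'a) \<Rightarrow> ('a \<Rightarrow> nat \<Rightarrow> nat)
    \<Rightarrow> (nat \<Rightarrow> nat) list \<Rightarrow> 'a set \<Rightarrow> ('a \<Rightarrow> real) \<Rightarrow> bool" where
  "is_harm_vec k L r s d F C x \<longleftrightarrow>
     (\<forall>v. v \<notin> verts L d \<longrightarrow> x v = 0) \<and>
     (\<forall>v. x v \<ge> 0) \<and>
     (\<Sum>v\<in>verts L d. x v) = 1 \<and>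
     (\<forall>v\<in>verts L d. (\<Sum>w\<in>verts L d. AF k L r s d F v w * x w)
          = spec_rad C (AF k L r s d F) * x v) \<and>
     (\<forall>v\<in>verts L d. v \<notin> vclosure L r s d C \<longrightarrow> x v = 0)"

definition harm_vec :: "nat \<Rightarrow> 'a set \<Rightarrow> ('a \<Rightarrow> 'a) \<Rightarrow> ('a \<Rightarrow> 'a) \<Rightarrow> ('a \<Rightarrow> nat \<Rightarrow> nat)
    \<Rightarrow> (nat \<Rightarrow> nat) list \<Rightarrow> 'a set \<Rightarrow> 'a \<Rightarrow> real" where
  "harm_vec k L r s d F C = (THE x. is_harm_vec k L r s d F C x)"

end

theory Submission
  imports Defs
begin

text \<open>
  The vertex matrices commute, since both \<open>A\<^sub>i A\<^sub>j\<close> and \<open>A\<^sub>j A\<^sub>i\<close> count paths of degree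
  \<open>e\<^sub>i + e\<^sub>j\<close> by unique factorisation; hence \<open>A\<^sub>F\<close> and \<open>A\<^sub>F\<^sub>'\<close> commute. Being well chosen,
  both have the zero pattern of reachability: positive on \<open>C \<times> C\<close>, no entries into the
  closure \<open>K\<close> of \<open>C\<close> from outside and none from \<open>C\<close> to \<open>K - C\<close>, while every vertex of
  \<open>K - C\<close> has an entry into \<open>C\<close>.

  For a matrix \<open>M\<close> with this pattern and the harmonic gap, Perron--Frobenius on \<open>C\<close> and the
  gap on \<open>K - C\<close> show that the eigenvectors of \<open>M\<close> for \<open>\<rho>(M\<^sup>C)\<close> supported on \<open>K\<close> are
  the multiples of the harmonic vector \<open>x\<close>, which is positive on \<open>K\<close>. A commuting matrix
  \<open>G\<close> with the same pattern maps \<open>x\<close> to such an eigenvector, so \<open>x\<close> is an eigenvector of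
  \<open>G\<close>, with eigenvalue \<open>\<rho>(G\<^sup>C)\<close> by the Collatz--Wielandt formula. Finally the entries
  of \<open>G\<close> from \<open>K - C\<close> into \<open>C\<close> make \<open>x\<close> a strict Collatz--Wielandt test vector for
  \<open>G\<^bsup>K-C\<^esup>\<close>, which gives the harmonic gap for \<open>G\<close>.
\<close>

section \<open>Spectral radius and the Collatz--Wielandt bounds\<close>

lemma obtain_max_on:
  fixes f :: "'a \<Rightarrow> real"
  assumes "finite S" "S \<noteq> {}"
  obtains v0 where "v0 \<in> S" "\<forall>w\<in>S. f w \<le> f v0"
proof -
  have "Max (f ` S) \<in> f ` S" using assms by simp
  then obtain v0 where "v0 \<in> S" "f v0 = Max (f ` S)" by auto
  then show thesis using that assms by simp
qed

lemma obtain_min_on: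
  fixes f :: "'a \<Rightarrow> real"
  assumes "finite S" "S \<noteq> {}"
  obtains v0 where "v0 \<in> S" "\<forall>w\<in>S. f v0 \<le> f w"
  using obtain_max_on[OF assms, of "\<lambda>w. - f w"] by auto

lemma eigval_norm_le_abs_entry_sum:
  fixes B :: "'a \<Rightarrow> 'a \<Rightarrow> real"
  assumes fin: "finite S" and \<mu>: "\<mu> \<in> eigvals S B"
  shows "cmod \<mu> \<le> (\<Sum>v\<in>S. \<Sum>w\<in>S. \<bar>B v w\<bar>)"
proof -
  obtain x where nz: "\<exists>v\<in>S. x v \<noteq> 0"
    and eq: "\<forall>v\<in>S. (\<Sum>w\<in>S. complex_of_real (B v w) * x w) = \<mu> * x v"
    using \<mu> unfolding eigvals_def by auto
  obtain v0 where v0: "v0 \<in> S" "\<forall>w\<in>S. cmod (x w) \<le> cmod (x v0)"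
    using obtain_max_on[OF fin, of "\<lambda>w. cmod (x w)"] nz by blast
  have "cmod (x v0) > 0" using nz v0 by (metis norm_le_zero_iff not_le order_trans)
  have "cmod \<mu> * cmod (x v0) = cmod (\<Sum>w\<in>S. complex_of_real (B v0 w) * x w)"
    using eq v0 by (simp add: norm_mult)
  also have "\<dots> \<le> (\<Sum>w\<in>S. \<bar>B v0 w\<bar> * cmod (x w))"
    by (rule order_trans[OF norm_sum]) (simp add: norm_mult)
  also have "\<dots> \<le> (\<Sum>w\<in>S. \<bar>B v0 w\<bar>) * cmod (x v0)"
    unfolding sum_distrib_right by (rule sum_mono) (simp add: v0 mult_left_mono)
  also have "\<dots> \<le> (\<Sum>v\<in>S. \<Sum>w\<in>S. \<bar>B v w\<bar>) * cmod (x v0)"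
    by (intro mult_right_mono member_le_sum v0 sum_nonneg fin) auto
  finally show ?thesis using \<open>cmod (x v0) > 0\<close> by simp
qed

lemma bdd_above_eigval_norms:
  "finite S \<Longrightarrow> bdd_above (insert 0 (cmod ` eigvals S B))"
  using eigval_norm_le_abs_entry_sum
  by (intro bdd_aboveI[where M = "\<Sum>v\<in>S. \<Sum>w\<in>S. \<bar>B v w\<bar>"]) (force intro: sum_nonneg)

lemma spec_rad_ge_eigval: "finite S \<Longrightarrow> \<mu> \<in> eigvals S B \<Longrightarrow> cmod \<mu> \<le> spec_rad S B"
  unfolding spec_rad_def by (rule cSup_upper) (use bdd_above_eigval_norms in auto)

lemma spec_rad_le: "(\<And>\<mu>. \<mu> \<in> eigvals S B \<Longrightarrow> cmod \<mu> \<le> c) \<Longrightarrow> 0 \<le> c \<Longrightarrow> spec_rad S B \<le> c"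
  unfolding spec_rad_def by (rule cSup_least) auto

lemma real_eigvec_in_eigvals:
  assumes "\<exists>v\<in>S. x v \<noteq> 0" "\<forall>v\<in>S. (\<Sum>w\<in>S. B v w * x w) = c * x v"
  shows "complex_of_real c \<in> eigvals S B"
  unfolding eigvals_def
proof (intro CollectI exI[of _ "\<lambda>v. complex_of_real (x v)"] conjI ballI)
  show "\<exists>v\<in>S. complex_of_real (x v) \<noteq> 0" using assms(1) by auto
  fix v assume "v \<in> S"
  then show "(\<Sum>w\<in>S. complex_of_real (B v w) * complex_of_real (x w)) = complex_of_real c * complex_of_real (x v)"
    using assms(2) by (simp flip: of_real_mult of_real_sum)
qed

lemma real_eigval_abs_le_spec_rad:
  "finite S \<Longrightarrow> \<exists>v\<in>S. x v \<noteq> 0 \<Longrightarrow> \<forall>v\<in>S. (\<Sum>w\<in>S. B v w * x w) = c * x v \<Longrightarrow> \<bar>c\<bar> \<le> spec_rad S B"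
  using spec_rad_ge_eigval[OF _ real_eigvec_in_eigvals] by force

lemma eigval_norm_le_collatz:
  fixes B :: "'a \<Rightarrow> 'a \<Rightarrow> real"
  assumes fin: "finite S" and nn: "\<forall>v\<in>S. \<forall>w\<in>S. 0 \<le> B v w" and xp: "\<forall>v\<in>S. 0 < x v"
    and le: "\<forall>v\<in>S. (\<Sum>w\<in>S. B v w * x w) \<le> c * x v" and \<mu>: "\<mu> \<in> eigvals S B"
  shows "cmod \<mu> \<le> c"
proof -
  obtain z where nz: "\<exists>v\<in>S. z v \<noteq> 0"
    and eq: "\<forall>v\<in>S. (\<Sum>w\<in>S. complex_of_real (B v w) * z w) = \<mu> * z v"
    using \<mu> unfolding eigvals_def by auto
  obtain v0 where v0: "v0 \<in> S" "\<forall>w\<in>S. cmod (z w) / x w \<le> cmod (z v0) / x v0"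
    using obtain_max_on[OF fin, of "\<lambda>w. cmod (z w) / x w"] nz by blast
  define t where "t = cmod (z v0) / x v0"
  have zt: "\<forall>w\<in>S. cmod (z w) \<le> t * x w"
    using v0 xp by (auto simp: t_def pos_divide_le_eq mult.commute)
  have xv0: "0 < x v0" using xp v0 by simp
  have tpos: "0 < t"
  proof -
    obtain v1 where "v1 \<in> S" "z v1 \<noteq> 0" using nz by blast
    then have "0 < cmod (z v1) / x v1" using xp by auto
    then show ?thesis using v0(2) \<open>v1 \<in> S\<close> unfolding t_def by (meson less_le_trans)
  qed
  have "cmod \<mu> * (t * x v0) = cmod (\<Sum>w\<in>S. complex_of_real (B v0 w) * z w)"
    using eq v0 xv0 by (simp add: t_def norm_mult)
  also have "\<dots> \<le> (\<Sum>w\<in>S. B v0 w * cmod (z w))"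
    by (rule order_trans[OF norm_sum]) (use nn v0 in \<open>simp add: norm_mult\<close>)
  also have "\<dots> \<le> (\<Sum>w\<in>S. B v0 w * (t * x w))"
    by (rule sum_mono) (use nn v0 zt in \<open>simp add: mult_left_mono\<close>)
  also have "\<dots> = t * (\<Sum>w\<in>S. B v0 w * x w)" by (simp add: sum_distrib_left algebra_simps)
  also have "\<dots> \<le> c * (t * x v0)"
    using mult_left_mono[OF le[rule_format, OF v0(1)] less_imp_le[OF tpos]] by (simp add: algebra_simps)
  finally show ?thesis using tpos xv0 by simp
qed

lemma spec_rad_le_collatz:
  fixes B :: "'a \<Rightarrow> 'a \<Rightarrow> real"
  assumes fin: "finite S" and ne: "S \<noteq> {}" and nn: "\<forall>v\<in>S. \<forall>w\<in>S. 0 \<le> B v w"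
    and xp: "\<forall>v\<in>S. 0 < x v" and le: "\<forall>v\<in>S. (\<Sum>w\<in>S. B v w * x w) \<le> c * x v"
  shows "spec_rad S B \<le> c"
proof (rule spec_rad_le)
  show "cmod \<mu> \<le> c" if "\<mu> \<in> eigvals S B" for \<mu>
    using eigval_norm_le_collatz[OF fin nn xp le that] .
  obtain v where v: "v \<in> S" using ne by auto
  have "0 \<le> (\<Sum>w\<in>S. B v w * x w)" using nn xp v by (auto intro!: sum_nonneg simp: less_imp_le)
  then have "0 \<le> c * x v" using le v by (meson order_trans)
  then show "0 \<le> c" using xp[rule_format, OF v] by (simp add: zero_le_mult_iff)
qed

lemma spec_rad_eq_positive_eigval:
  fixes B :: "'a \<Rightarrow> 'a \<Rightarrow> real"
  assumes fin: "finite S" and ne: "S \<noteq> {}" and nn: "\<forall>v\<in>S. \<forall>w\<in>S. 0 \<le> B v w"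
    and xp: "\<forall>v\<in>S. 0 < x v" and eq: "\<forall>v\<in>S. (\<Sum>w\<in>S. B v w * x w) = c * x v"
  shows "spec_rad S B = c"
proof (rule antisym)
  show "spec_rad S B \<le> c" using spec_rad_le_collatz[OF fin ne nn xp] eq by simp
  have "\<exists>v\<in>S. x v \<noteq> 0" using ne xp by force
  then show "c \<le> spec_rad S B" using real_eigval_abs_le_spec_rad[OF fin _ eq] by simp
qed

lemma spec_rad_less_collatz:
  fixes B :: "'a \<Rightarrow> 'a \<Rightarrow> real"
  assumes fin: "finite S" and ne: "S \<noteq> {}" and nn: "\<forall>v\<in>S. \<forall>w\<in>S. 0 \<le> B v w"
    and xp: "\<forall>v\<in>S. 0 < x v" and lt: "\<forall>v\<in>S. (\<Sum>w\<in>S. B v w * x w) < c * x v"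
  shows "spec_rad S B < c"
proof -
  define ratio where "ratio v = (\<Sum>u\<in>S. B v u * x u) / x v" for v
  obtain v0 where v0: "v0 \<in> S" "\<forall>w\<in>S. ratio w \<le> ratio v0"
    using obtain_max_on[OF fin ne, of ratio] by blast
  have "\<forall>v\<in>S. (\<Sum>w\<in>S. B v w * x w) \<le> ratio v0 * x v"
    using v0 xp by (auto simp: ratio_def pos_divide_le_eq)
  then have "spec_rad S B \<le> ratio v0" by (rule spec_rad_le_collatz[OF fin ne nn xp])
  moreover have "ratio v0 < c" using lt v0 xp by (auto simp: ratio_def pos_divide_less_eq)
  ultimately show ?thesis by simp
qed

lemma positive_matrix_eigvec_unique:
  fixes B :: "'a \<Rightarrow> 'a \<Rightarrow> real"
  assumes fin: "finite S" and pos: "\<forall>v\<in>S. \<forall>w\<in>S. 0 < B v w" and xp: "\<forall>v\<in>S. 0 < x v"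
    and ex: "\<forall>v\<in>S. (\<Sum>w\<in>S. B v w * x w) = c * x v"
    and ez: "\<forall>v\<in>S. (\<Sum>w\<in>S. B v w * z w) = c * z v"
  shows "\<exists>a. \<forall>v\<in>S. z v = a * x v"
proof (cases "S = {}")
  case False
  obtain v0 where v0: "v0 \<in> S" "\<forall>w\<in>S. z v0 / x v0 \<le> z w / x w"
    using obtain_min_on[OF fin False, of "\<lambda>w. z w / x w"] by blast
  define a where "a = z v0 / x v0"
  define y where "y w = z w - a * x w" for w
  \<comment> \<open>y is a nonnegative eigenvector vanishing at v0; positivity of row v0 forces y = 0.\<close>
  have yn: "\<forall>w\<in>S. 0 \<le> y w"
    using v0 xp by (auto simp: y_def a_def pos_le_divide_eq mult.commute)
  have "(\<Sum>w\<in>S. B v0 w * y w) = (\<Sum>w\<in>S. B v0 w * z w) - a * (\<Sum>w\<in>S. B v0 w * x w)"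
    by (simp add: y_def right_diff_distrib sum_subtractf sum_distrib_left mult.left_commute)
  also have "\<dots> = c * y v0" using ex ez v0 by (simp add: y_def algebra_simps)
  also have "y v0 = 0" using xp[rule_format, OF v0(1)] by (simp add: y_def a_def)
  finally have "(\<Sum>w\<in>S. B v0 w * y w) = 0" by simp
  moreover have "0 \<le> B v0 w * y w" if "w \<in> S" for w
    using pos yn v0 that by (meson less_imp_le mult_nonneg_nonneg)
  ultimately have "\<forall>w\<in>S. B v0 w * y w = 0"
    using sum_nonneg_eq_0_iff[OF fin, of "\<lambda>w. B v0 w * y w"] by simp
  then have "\<forall>w\<in>S. y w = 0" using pos v0 by (metis mult_eq_0_iff order_less_irrefl)
  then show ?thesis by (auto simp: y_def)
qed simp

lemma positive_matrix_apply_pos: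
  fixes B :: "'a \<Rightarrow> 'a \<Rightarrow> real"
  assumes fin: "finite S" and pos: "\<forall>v\<in>S. \<forall>w\<in>S. 0 < B v w" and xn: "\<forall>v\<in>S. 0 \<le> x v"
    and nz: "\<exists>v\<in>S. x v \<noteq> 0" and v: "v \<in> S"
  shows "0 < (\<Sum>w\<in>S. B v w * x w)"
proof -
  obtain u where u: "u \<in> S" "0 < x u" using nz xn by (metis order_le_neq_trans)
  have "0 < B v u * x u" using pos u v by simp
  moreover have "0 \<le> B v w * x w" if "w \<in> S" for w
    using pos xn v that by (meson less_imp_le mult_nonneg_nonneg)
  ultimately show ?thesis by (rule sum_pos2[OF fin u(1)])
qed

lemma positive_matrix_nonneg_eigvec_pos:
  fixes B :: "'a \<Rightarrow> 'a \<Rightarrow> real"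
  assumes fin: "finite S" and pos: "\<forall>v\<in>S. \<forall>w\<in>S. 0 < B v w" and xn: "\<forall>v\<in>S. 0 \<le> x v"
    and nz: "\<exists>v\<in>S. x v \<noteq> 0" and ex: "\<forall>v\<in>S. (\<Sum>w\<in>S. B v w * x w) = c * x v"
  shows "0 < c" "\<forall>v\<in>S. 0 < x v"
proof -
  obtain u where u: "u \<in> S" "0 < x u" using nz xn by (metis order_le_neq_trans)
  have cx: "0 < c * x v" if "v \<in> S" for v
    using positive_matrix_apply_pos[OF fin pos xn nz that] ex that by simp
  show "0 < c" using cx[OF u(1)] u(2) by (simp add: zero_less_mult_iff)
  then show "\<forall>v\<in>S. 0 < x v" using cx by (simp add: zero_less_mult_iff)
qed

section \<open>Perron vectors of nonnegative matrices\<close>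

definition prob_vector :: "'a set \<Rightarrow> ('a \<Rightarrow> real) \<Rightarrow> bool" where
  "prob_vector S x \<longleftrightarrow> (\<forall>v\<in>S. 0 \<le> x v) \<and> (\<Sum>v\<in>S. x v) = 1"

lemma prob_vector_le_one:
  assumes "finite S" "prob_vector S x" "v \<in> S"
  shows "x v \<le> 1"
proof -
  have "x v \<le> sum x S" using assms by (intro member_le_sum) (auto simp: prob_vector_def)
  then show ?thesis using assms(2) by (simp add: prob_vector_def)
qed

lemma prob_vector_nonzero: "prob_vector S x \<Longrightarrow> \<exists>v\<in>S. x v \<noteq> 0"
  unfolding prob_vector_def by (metis sum.neutral zero_neq_one)

lemma prob_vector_normalize:
  assumes "\<forall>v\<in>S. 0 \<le> z v" "0 < sum z S"
  shows "prob_vector S (\<lambda>v. z v / sum z S)"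
  using assms by (simp add: prob_vector_def sum_divide_distrib[symmetric])

lemma obtain_seq_tendsto_Sup:
  fixes T :: "real set"
  assumes bdd: "bdd_above T" and ne: "T \<noteq> {}"
  obtains c where "\<And>n. c n \<in> T" "c \<longlonglongrightarrow> Sup T"
proof -
  have "\<exists>c\<in>T. Sup T - inverse (real (Suc n)) < c" for n
  proof -
    have "Sup T - inverse (real (Suc n)) < Sup T" by simp
    then show ?thesis using less_cSupE[of _ T] ne by blast
  qed
  then obtain c where cT: "\<And>n. c n \<in> T" and c_gt: "\<And>n. Sup T - inverse (real (Suc n)) < c n"
    using bchoice[of UNIV "\<lambda>n c. c \<in> T \<and> Sup T - inverse (real (Suc n)) < c"] by blast
  have "c \<longlonglongrightarrow> Sup T"
  proof (rule tendsto_sandwich[of "\<lambda>n. Sup T - inverse (real (Suc n))" _ _ "\<lambda>_. Sup T"])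
    show "\<forall>\<^sub>F n in sequentially. Sup T - inverse (real (Suc n)) \<le> c n"
      using c_gt by (simp add: less_imp_le)
    show "\<forall>\<^sub>F n in sequentially. c n \<le> Sup T" using cSup_upper[OF cT bdd] by simp
    have "(\<lambda>n. Sup T - inverse (real (Suc n))) \<longlonglongrightarrow> Sup T - 0"
      by (intro tendsto_diff tendsto_const LIMSEQ_inverse_real_of_nat)
    then show "(\<lambda>n. Sup T - inverse (real (Suc n))) \<longlonglongrightarrow> Sup T" by simp
  qed simp
  with cT show thesis by (rule that)
qed

lemma bounded_convergent_subseq_finite:
  fixes f :: "nat \<Rightarrow> 'a \<Rightarrow> real"
  assumes "finite S" and "\<forall>n. \<forall>v\<in>S. \<bar>f n v\<bar> \<le> b"
  shows "\<exists>g. strict_mono g \<and> (\<forall>v\<in>S. convergent (\<lambda>n. f (g n) v))"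
  using assms
proof (induction S rule: finite_induct)
  case empty
  show ?case using strict_mono_id by blast
next
  case (insert a S)
  obtain g where g: "strict_mono g" "\<forall>v\<in>S. convergent (\<lambda>n. f (g n) v)"
    using insert by auto
  obtain h where h: "strict_mono h" "monoseq (\<lambda>n. f (g (h n)) a)"
    using seq_monosub[of "\<lambda>n. f (g n) a"] by blast
  have "Bseq (\<lambda>n. f (g (h n)) a)" using insert.prems by (intro BseqI'[of _ b]) simp
  then have "convergent (\<lambda>n. f (g (h n)) a)" using h(2) by (rule Bseq_monoseq_convergent)
  moreover have "convergent (\<lambda>n. f (g (h n)) v)" if "v \<in> S" for v
    using convergent_subseq_convergent[OF g(2)[rule_format, OF that] h(1)] by (simp add: o_def)
  ultimately show ?case using strict_mono_o[OF g(1) h(1)] by (auto simp: o_def)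
qed

lemma prob_vector_convergent_subseq:
  fixes X :: "nat \<Rightarrow> 'a \<Rightarrow> real"
  assumes fin: "finite S" and X: "\<And>n. prob_vector S (X n)"
  obtains g x where "strict_mono g" "\<forall>v\<in>S. (\<lambda>n. X (g n) v) \<longlonglongrightarrow> x v" "prob_vector S x"
proof -
  have "\<forall>n. \<forall>v\<in>S. \<bar>X n v\<bar> \<le> 1"
    using X prob_vector_le_one[OF fin] by (auto simp: prob_vector_def)
  then obtain g where g: "strict_mono g" "\<forall>v\<in>S. convergent (\<lambda>n. X (g n) v)"
    using bounded_convergent_subseq_finite[OF fin, of X] by blast
  define x where "x v = lim (\<lambda>n. X (g n) v)" for v
  have lim: "\<forall>v\<in>S. (\<lambda>n. X (g n) v) \<longlonglongrightarrow> x v"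
    using g(2) by (auto simp: x_def convergent_LIMSEQ_iff)
  have "\<forall>v\<in>S. 0 \<le> x v"
    using X lim by (auto intro!: LIMSEQ_le_const simp: prob_vector_def)
  moreover have "(\<lambda>n. \<Sum>v\<in>S. X (g n) v) \<longlonglongrightarrow> (\<Sum>v\<in>S. x v)"
    using lim by (intro tendsto_sum) auto
  then have "(\<Sum>v\<in>S. x v) = 1"
    using X by (simp add: prob_vector_def LIMSEQ_const_iff)
  ultimately show thesis using that g(1) lim by (simp add: prob_vector_def)
qed

definition collatz_levels :: "'a set \<Rightarrow> ('a \<Rightarrow> 'a \<Rightarrow> real) \<Rightarrow> real set" where
  "collatz_levels S P = {c. \<exists>y. prob_vector S y \<and> (\<forall>v\<in>S. c * y v \<le> (\<Sum>w\<in>S. P v w * y w))}"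

lemma collatz_levels_le_entry_sum:
  fixes P :: "'a \<Rightarrow> 'a \<Rightarrow> real"
  assumes fin: "finite S" and nn: "\<forall>v\<in>S. \<forall>w\<in>S. 0 \<le> P v w" and c: "c \<in> collatz_levels S P"
  shows "c \<le> (\<Sum>v\<in>S. \<Sum>w\<in>S. P v w)"
proof -
  obtain y where y: "prob_vector S y" and le: "\<forall>v\<in>S. c * y v \<le> (\<Sum>w\<in>S. P v w * y w)"
    using c by (auto simp: collatz_levels_def)
  have "c = (\<Sum>v\<in>S. c * y v)" using y by (simp add: prob_vector_def flip: sum_distrib_left)
  also have "\<dots> \<le> (\<Sum>v\<in>S. \<Sum>w\<in>S. P v w * y w)" using le by (intro sum_mono) simp
  also have "\<dots> \<le> (\<Sum>v\<in>S. \<Sum>w\<in>S. P v w)"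
    using nn y prob_vector_le_one[OF fin y]
    by (intro sum_mono) (auto intro: mult_left_le simp: prob_vector_def)
  finally show ?thesis .
qed

lemma bdd_above_collatz_levels:
  assumes "finite S" "\<forall>v\<in>S. \<forall>w\<in>S. 0 \<le> P v w"
  shows "bdd_above (collatz_levels S P)"
  using collatz_levels_le_entry_sum[OF assms] by (rule bdd_aboveI)

lemma Sup_collatz_levels_attained:
  fixes P :: "'a \<Rightarrow> 'a \<Rightarrow> real"
  assumes fin: "finite S" and nn: "\<forall>v\<in>S. \<forall>w\<in>S. 0 \<le> P v w" and ne: "collatz_levels S P \<noteq> {}"
  shows "Sup (collatz_levels S P) \<in> collatz_levels S P"
proof -
  let ?T = "collatz_levels S P"
  obtain c where cT: "\<And>n. c n \<in> ?T" and c_lim: "c \<longlonglongrightarrow> Sup ?T"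
    by (rule obtain_seq_tendsto_Sup[OF bdd_above_collatz_levels[OF fin nn] ne]) blast
  have "\<forall>n. \<exists>y. prob_vector S y \<and> (\<forall>v\<in>S. c n * y v \<le> (\<Sum>w\<in>S. P v w * y w))"
    using cT unfolding collatz_levels_def by blast
  then obtain X where X: "\<And>n. prob_vector S (X n)"
    "\<And>n. \<forall>v\<in>S. c n * X n v \<le> (\<Sum>w\<in>S. P v w * X n w)"
    using choice[of "\<lambda>n y. prob_vector S y \<and> (\<forall>v\<in>S. c n * y v \<le> (\<Sum>w\<in>S. P v w * y w))"] by blast
  obtain g x where g: "strict_mono g" "\<forall>v\<in>S. (\<lambda>n. X (g n) v) \<longlonglongrightarrow> x v" "prob_vector S x"
    by (rule prob_vector_convergent_subseq[OF fin X(1)])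
  have cg_lim: "(\<lambda>n. c (g n)) \<longlonglongrightarrow> Sup ?T"
    using LIMSEQ_subseq_LIMSEQ[OF c_lim g(1)] by (simp add: o_def)
  have "\<forall>v\<in>S. Sup ?T * x v \<le> (\<Sum>w\<in>S. P v w * x w)"
  proof
    fix v assume v: "v \<in> S"
    have "(\<lambda>n. c (g n) * X (g n) v) \<longlonglongrightarrow> Sup ?T * x v"
      using cg_lim g(2) v by (intro tendsto_mult) auto
    moreover have "(\<lambda>n. \<Sum>w\<in>S. P v w * X (g n) w) \<longlonglongrightarrow> (\<Sum>w\<in>S. P v w * x w)"
      using g(2) by (intro tendsto_sum tendsto_mult tendsto_const) auto
    ultimately show "Sup ?T * x v \<le> (\<Sum>w\<in>S. P v w * x w)"
      by (rule LIMSEQ_le) (use X(2) v in auto)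
  qed
  then show ?thesis using g(3) unfolding collatz_levels_def by blast
qed

lemma positive_matrix_collatz_improve:
  fixes P :: "'a \<Rightarrow> 'a \<Rightarrow> real"
  assumes fin: "finite S" and pos: "\<forall>v\<in>S. \<forall>w\<in>S. 0 < P v w" and x: "prob_vector S x"
    and le: "\<forall>v\<in>S. R * x v \<le> (\<Sum>w\<in>S. P v w * x w)"
    and v0: "v0 \<in> S" "R * x v0 < (\<Sum>w\<in>S. P v0 w * x w)"
  shows "\<exists>c\<in>collatz_levels S P. R < c"
proof -
  define z where "z v = (\<Sum>w\<in>S. P v w * x w)" for v
  \<comment> \<open>Applying P once more makes the inequality strict in every coordinate.\<close>
  have zpos: "\<forall>v\<in>S. 0 < z v"
    using positive_matrix_apply_pos[OF fin pos] x prob_vector_nonzero[OF x]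
    by (auto simp: z_def prob_vector_def)
  have "\<forall>w\<in>S. 0 \<le> z w - R * x w" "\<exists>w\<in>S. z w - R * x w \<noteq> 0"
    using le v0 by (auto simp: z_def intro!: bexI[of _ v0])
  then have "0 < (\<Sum>w\<in>S. P v w * (z w - R * x w))" if "v \<in> S" for v
    using positive_matrix_apply_pos[OF fin pos _ _ that, of "\<lambda>w. z w - R * x w"] by blast
  then have strict: "\<forall>v\<in>S. 0 < (\<Sum>w\<in>S. P v w * z w) - R * z v"
    by (simp add: z_def algebra_simps sum_subtractf sum_distrib_left)
  define ratio where "ratio v = ((\<Sum>w\<in>S. P v w * z w) - R * z v) / z v" for v
  obtain v1 where v1: "v1 \<in> S" "\<forall>v\<in>S. ratio v1 \<le> ratio v"
    using obtain_min_on[OF fin, of ratio] v0(1) by blast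
  have "0 < ratio v1" using strict zpos v1(1) by (simp add: ratio_def)
  have z_le: "(R + ratio v1) * z v \<le> (\<Sum>w\<in>S. P v w * z w)" if "v \<in> S" for v
    using v1(2) that zpos by (auto simp: ratio_def pos_le_divide_eq algebra_simps)
  define Z where "Z = sum z S"
  have "0 < Z" unfolding Z_def using zpos v0(1) fin by (intro sum_pos) auto
  have "prob_vector S (\<lambda>v. z v / Z)"
    using zpos \<open>0 < Z\<close> unfolding Z_def by (intro prob_vector_normalize) (auto intro: less_imp_le)
  moreover have "\<forall>v\<in>S. (R + ratio v1) * (z v / Z) \<le> (\<Sum>w\<in>S. P v w * (z w / Z))"
  proof
    fix v assume "v \<in> S"
    show "(R + ratio v1) * (z v / Z) \<le> (\<Sum>w\<in>S. P v w * (z w / Z))"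
      using divide_right_mono[OF z_le[OF \<open>v \<in> S\<close>] less_imp_le[OF \<open>0 < Z\<close>]]
      by (simp add: sum_divide_distrib)
  qed
  ultimately have "R + ratio v1 \<in> collatz_levels S P" by (auto simp: collatz_levels_def)
  then show ?thesis using \<open>0 < ratio v1\<close> by force
qed

lemma positive_matrix_perron_vector:
  fixes P :: "'a \<Rightarrow> 'a \<Rightarrow> real"
  assumes fin: "finite S" and pos: "\<forall>v\<in>S. \<forall>w\<in>S. 0 < P v w"
    and u: "prob_vector S u" and ut: "\<forall>v\<in>S. t * u v \<le> (\<Sum>w\<in>S. P v w * u w)"
  obtains x c where "prob_vector S x" "t \<le> c" "\<forall>v\<in>S. (\<Sum>w\<in>S. P v w * x w) = c * x v"
proof -
  let ?R = "Sup (collatz_levels S P)"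
  have nn: "\<forall>v\<in>S. \<forall>w\<in>S. 0 \<le> P v w" using pos by (simp add: less_imp_le)
  have t: "t \<in> collatz_levels S P" using u ut by (auto simp: collatz_levels_def)
  then have "?R \<in> collatz_levels S P" using Sup_collatz_levels_attained[OF fin nn] by blast
  then obtain x where x: "prob_vector S x" "\<forall>v\<in>S. ?R * x v \<le> (\<Sum>w\<in>S. P v w * x w)"
    by (auto simp: collatz_levels_def)
  have R_max: "c \<le> ?R" if "c \<in> collatz_levels S P" for c
    using cSup_upper[OF that bdd_above_collatz_levels[OF fin nn]] .
  \<comment> \<open>a maximal level is attained with equality, otherwise it could be improved\<close>
  have "\<forall>v\<in>S. (\<Sum>w\<in>S. P v w * x w) = ?R * x v"
  proof (rule ccontr)
    assume "\<not> ?thesis"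
    then obtain v0 where v0: "v0 \<in> S" "(\<Sum>w\<in>S. P v0 w * x w) \<noteq> ?R * x v0" by blast
    then have "?R * x v0 < (\<Sum>w\<in>S. P v0 w * x w)"
      using x(2)[rule_format, OF v0(1)] by (simp add: order_less_le)
    then show False
      using positive_matrix_collatz_improve[OF fin pos x v0(1)] R_max by (meson not_le)
  qed
  then show thesis using that[OF x(1) R_max[OF t]] by blast
qed

lemma eigenpair_limit:
  fixes P :: "nat \<Rightarrow> 'a \<Rightarrow> 'a \<Rightarrow> real"
  assumes fin: "finite S"
    and P: "\<forall>v\<in>S. \<forall>w\<in>S. (\<lambda>n. P n v w) \<longlonglongrightarrow> M v w"
    and X: "\<forall>v\<in>S. (\<lambda>n. X n v) \<longlonglongrightarrow> x v"
    and sum_X: "\<And>n. (\<Sum>v\<in>S. X n v) = 1"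
    and eig: "\<And>n. \<forall>v\<in>S. (\<Sum>w\<in>S. P n v w * X n w) = c n * X n v"
  defines "s \<equiv> \<Sum>v\<in>S. \<Sum>w\<in>S. M v w * x w"
  shows "c \<longlonglongrightarrow> s" and "\<forall>v\<in>S. (\<Sum>w\<in>S. M v w * x w) = s * x v"
proof -
  have rows: "(\<lambda>n. \<Sum>w\<in>S. P n v w * X n w) \<longlonglongrightarrow> (\<Sum>w\<in>S. M v w * x w)" if "v \<in> S" for v
    using P X that by (intro tendsto_sum tendsto_mult) auto
  \<comment> \<open>the eigenvalue is the total mass of the image vector, since X n has mass 1\<close>
  have "c n = (\<Sum>v\<in>S. \<Sum>w\<in>S. P n v w * X n w)" for n
    using eig[of n] sum_X[of n] by (simp add: sum_distrib_left[symmetric])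
  then have "c = (\<lambda>n. \<Sum>v\<in>S. \<Sum>w\<in>S. P n v w * X n w)" by (rule ext)
  then show c: "c \<longlonglongrightarrow> s" unfolding s_def using rows by (simp add: tendsto_sum)
  show "\<forall>v\<in>S. (\<Sum>w\<in>S. M v w * x w) = s * x v"
  proof
    fix v assume "v \<in> S"
    have "(\<lambda>n. c n * X n v) \<longlonglongrightarrow> s * x v" using c X \<open>v \<in> S\<close> by (intro tendsto_mult) auto
    moreover have "(\<lambda>n. c n * X n v) = (\<lambda>n. \<Sum>w\<in>S. P n v w * X n w)" using eig \<open>v \<in> S\<close> by simp
    ultimately show "(\<Sum>w\<in>S. M v w * x w) = s * x v"
      using LIMSEQ_unique[OF rows[OF \<open>v \<in> S\<close>]] by simp
  qed
qed

lemma nonneg_matrix_perron_vector: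
  fixes M :: "'a \<Rightarrow> 'a \<Rightarrow> real"
  assumes fin: "finite S" and nn: "\<forall>v\<in>S. \<forall>w\<in>S. 0 \<le> M v w"
    and u: "prob_vector S u" and ut: "\<forall>v\<in>S. t * u v \<le> (\<Sum>w\<in>S. M v w * u w)"
  obtains x c where "prob_vector S x" "t \<le> c" "\<forall>v\<in>S. (\<Sum>w\<in>S. M v w * x w) = c * x v"
proof -
  define P where "P n v w = M v w + inverse (real (Suc n))" for n v w
  have "\<exists>y c. prob_vector S y \<and> t \<le> c \<and> (\<forall>v\<in>S. (\<Sum>w\<in>S. P n v w * y w) = c * y v)" for n
  proof -
    have pos: "\<forall>v\<in>S. \<forall>w\<in>S. 0 < P n v w" using nn by (simp add: P_def add_nonneg_pos)
    have "(\<Sum>w\<in>S. P n v w * u w) = (\<Sum>w\<in>S. M v w * u w) + inverse (real (Suc n))" for v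
      using u by (simp add: P_def prob_vector_def distrib_right sum.distrib flip: sum_distrib_left)
    then have "\<forall>v\<in>S. t * u v \<le> (\<Sum>w\<in>S. P n v w * u w)"
      using ut by (simp add: add_increasing2)
    then obtain y c where "prob_vector S y" "t \<le> c" "\<forall>v\<in>S. (\<Sum>w\<in>S. P n v w * y w) = c * y v"
      by (rule positive_matrix_perron_vector[OF fin pos u])
    then show ?thesis by blast
  qed
  then obtain X where X: "\<And>n. prob_vector S (X n)"
    "\<And>n. \<exists>c. t \<le> c \<and> (\<forall>v\<in>S. (\<Sum>w\<in>S. P n v w * X n w) = c * X n v)"
    using choice[of "\<lambda>n y. prob_vector S y \<and>
      (\<exists>c. t \<le> c \<and> (\<forall>v\<in>S. (\<Sum>w\<in>S. P n v w * y w) = c * y v))"] by blast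
  then obtain c where c: "\<And>n. t \<le> c n"
    "\<And>n. \<forall>v\<in>S. (\<Sum>w\<in>S. P n v w * X n w) = c n * X n v"
    using choice[of "\<lambda>n c. t \<le> c \<and> (\<forall>v\<in>S. (\<Sum>w\<in>S. P n v w * X n w) = c * X n v)"] by blast
  obtain g x where g: "strict_mono g" "\<forall>v\<in>S. (\<lambda>n. X (g n) v) \<longlonglongrightarrow> x v" "prob_vector S x"
    by (rule prob_vector_convergent_subseq[OF fin X(1)])
  have "(\<lambda>n. P (g n) v w) \<longlonglongrightarrow> M v w + 0" for v w
    unfolding P_def using LIMSEQ_subseq_LIMSEQ[OF LIMSEQ_inverse_real_of_nat g(1)]
    by (intro tendsto_add) (auto simp: o_def)
  then have P_lim: "\<forall>v\<in>S. \<forall>w\<in>S. (\<lambda>n. P (g n) v w) \<longlonglongrightarrow> M v w" by simp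
  have "\<And>n. (\<Sum>v\<in>S. X (g n) v) = 1" using X(1) by (simp add: prob_vector_def)
  note lim = eigenpair_limit[OF fin P_lim g(2) this c(2)]
  have "t \<le> (\<Sum>v\<in>S. \<Sum>w\<in>S. M v w * x w)"
    using c(1) by (intro LIMSEQ_le_const[OF lim(1)]) auto
  then show thesis using that g(3) lim(2) by blast
qed

section \<open>Matrices with the zero pattern of a component\<close>

text \<open>
  In this section \<open>M\<close> abstracts \<open>A\<^sub>F\<close> and \<open>K\<close> the closure \<open>\<overline>C\<close> of the component \<open>C\<close>:
  \<open>dominant_block\<close> is the spectral condition of \<open>F\<close>-harmonicity and \<open>harmonic_vector\<close>
  is the condition characterising \<open>x\<^sub>F\<^sup>C\<close>.
\<close>

definition component_pattern :: "'a set \<Rightarrow> 'a set \<Rightarrow> 'a set \<Rightarrow> ('a \<Rightarrow> 'a \<Rightarrow> real) \<Rightarrow> bool" where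
  "component_pattern V C K M \<longleftrightarrow>
     (\<forall>v\<in>V. \<forall>w\<in>V. 0 \<le> M v w) \<and> (\<forall>v\<in>C. \<forall>w\<in>C. 0 < M v w) \<and>
     (\<forall>v\<in>V - K. \<forall>w\<in>K. M v w = 0) \<and> (\<forall>v\<in>C. \<forall>w\<in>K - C. M v w = 0) \<and>
     (\<forall>v\<in>K - C. \<exists>c\<in>C. 0 < M v c)"

definition harmonic_vector ::
    "'a set \<Rightarrow> 'a set \<Rightarrow> 'a set \<Rightarrow> ('a \<Rightarrow> 'a \<Rightarrow> real) \<Rightarrow> ('a \<Rightarrow> real) \<Rightarrow> bool" where
  "harmonic_vector V K C M x \<longleftrightarrow>
     (\<forall>v. v \<notin> V \<longrightarrow> x v = 0) \<and> (\<forall>v. 0 \<le> x v) \<and> (\<Sum>v\<in>V. x v) = 1 \<and>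
     (\<forall>v\<in>V. (\<Sum>w\<in>V. M v w * x w) = spec_rad C M * x v) \<and> (\<forall>v\<in>V. v \<notin> K \<longrightarrow> x v = 0)"

definition dominant_block :: "'a set \<Rightarrow> 'a set \<Rightarrow> ('a \<Rightarrow> 'a \<Rightarrow> real) \<Rightarrow> bool" where
  "dominant_block K C M \<longleftrightarrow> K - C = {} \<or> spec_rad (K - C) M < spec_rad C M"

lemma commuting_matrix_preserves_eigvec:
  fixes M G :: "'a \<Rightarrow> 'a \<Rightarrow> real"
  assumes comm: "\<forall>v\<in>V. \<forall>w\<in>V. (\<Sum>u\<in>V. M v u * G u w) = (\<Sum>u\<in>V. G v u * M u w)"
    and eig: "\<forall>v\<in>V. (\<Sum>w\<in>V. M v w * x w) = c * x v" and v: "v \<in> V"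
  shows "(\<Sum>w\<in>V. M v w * (\<Sum>u\<in>V. G w u * x u)) = c * (\<Sum>w\<in>V. G v w * x w)"
proof -
  have "(\<Sum>w\<in>V. M v w * (\<Sum>u\<in>V. G w u * x u)) = (\<Sum>u\<in>V. \<Sum>w\<in>V. M v w * G w u * x u)"
    by (simp add: sum_distrib_left mult.assoc) (rule sum.swap)
  also have "\<dots> = (\<Sum>u\<in>V. (\<Sum>w\<in>V. G v w * M w u) * x u)"
    using comm v by (simp add: sum_distrib_right[symmetric])
  also have "\<dots> = (\<Sum>w\<in>V. G v w * (\<Sum>u\<in>V. M w u * x u))"
    by (simp add: sum_distrib_left sum_distrib_right mult.assoc) (rule sum.swap)
  also have "\<dots> = c * (\<Sum>w\<in>V. G v w * x w)"
    using eig by (simp add: sum_distrib_left algebra_simps)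
  finally show ?thesis .
qed

locale nested_blocks =
  fixes V C K :: "'a set"
  assumes finite_V: "finite V" and C_sub_K: "C \<subseteq> K" and K_sub_V: "K \<subseteq> V" and C_ne: "C \<noteq> {}"
begin

lemma finite_K: "finite K" and finite_C: "finite C" and finite_K_minus_C: "finite (K - C)"
  using finite_V C_sub_K K_sub_V by (auto intro: finite_subset)

lemma sum_V_split:
  fixes f :: "'a \<Rightarrow> real"
  assumes "\<forall>w\<in>V - K. f w = 0"
  shows "(\<Sum>w\<in>V. f w) = (\<Sum>w\<in>C. f w) + (\<Sum>w\<in>K - C. f w)"
proof -
  have "(\<Sum>w\<in>V. f w) = (\<Sum>w\<in>K. f w)"
    using assms by (intro sum.mono_neutral_right[OF finite_V K_sub_V]) auto
  also have "\<dots> = (\<Sum>w\<in>C. f w) + (\<Sum>w\<in>K - C. f w)"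
    using sum.subset_diff[OF C_sub_K finite_K] by (simp add: add.commute)
  finally show ?thesis .
qed

lemma row_sum_on_C:
  assumes "component_pattern V C K M" "\<forall>w\<in>V - K. x w = 0" "v \<in> C"
  shows "(\<Sum>w\<in>V. M v w * x w) = (\<Sum>w\<in>C. M v w * x w)"
  using sum_V_split[of "\<lambda>w. M v w * x w"] assms by (simp add: component_pattern_def)

lemma row_sum_off_K:
  assumes "component_pattern V C K M" "\<forall>w\<in>V - K. x w = 0" "v \<in> V - K"
  shows "(\<Sum>w\<in>V. M v w * x w) = 0"
proof -
  have "(\<Sum>w\<in>V. M v w * x w) = (\<Sum>w\<in>C. M v w * x w) + (\<Sum>w\<in>K - C. M v w * x w)"
    using assms(2) by (intro sum_V_split) simp
  also have "\<dots> = 0"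
    using assms C_sub_K by (auto simp: component_pattern_def subset_iff intro!: sum.neutral)
  finally show ?thesis .
qed

lemma dominant_no_eigvec_on_K_minus_C:
  assumes "dominant_block K C M" "spec_rad C M \<le> c"
    and "\<forall>v\<in>K - C. (\<Sum>w\<in>K - C. M v w * z w) = c * z v"
  shows "\<forall>v\<in>K - C. z v = 0"
proof (rule ccontr)
  assume nz: "\<not> ?thesis"
  then have "\<bar>c\<bar> \<le> spec_rad (K - C) M"
    using real_eigval_abs_le_spec_rad[OF finite_K_minus_C _ assms(3)] by blast
  moreover have "spec_rad (K - C) M < spec_rad C M" using assms(1) nz
    by (auto simp: dominant_block_def)
  ultimately show False using assms(2) by simp
qed

lemma eigvec_zero_if_zero_on_C:
  assumes dom: "dominant_block K C M"
    and z0: "\<forall>w\<in>V - K. z w = 0" and zC: "\<forall>w\<in>C. z w = 0"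
    and eig: "\<forall>v\<in>V. (\<Sum>w\<in>V. M v w * z w) = spec_rad C M * z v"
  shows "\<forall>v\<in>V. z v = 0"
proof -
  have "\<forall>v\<in>K - C. (\<Sum>w\<in>K - C. M v w * z w) = spec_rad C M * z v"
  proof
    fix v assume v: "v \<in> K - C"
    have "(\<Sum>w\<in>V. M v w * z w) = (\<Sum>w\<in>C. M v w * z w) + (\<Sum>w\<in>K - C. M v w * z w)"
      using z0 by (intro sum_V_split) simp
    then show "(\<Sum>w\<in>K - C. M v w * z w) = spec_rad C M * z v"
      using eig zC v K_sub_V by auto
  qed
  then have "\<forall>v\<in>K - C. z v = 0" using dominant_no_eigvec_on_K_minus_C[OF dom order_refl] by blast
  then show ?thesis using z0 zC by blast
qed

lemma eigvec_on_C:
  assumes "component_pattern V C K M" "\<forall>w\<in>V - K. x w = 0"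
    and "\<forall>v\<in>V. (\<Sum>w\<in>V. M v w * x w) = c * x v"
  shows "\<forall>v\<in>C. (\<Sum>w\<in>C. M v w * x w) = c * x v"
proof
  fix v assume "v \<in> C"
  then have "v \<in> V" using C_sub_K K_sub_V by blast
  then show "(\<Sum>w\<in>C. M v w * x w) = c * x v"
    using assms(3) row_sum_on_C[OF assms(1,2) \<open>v \<in> C\<close>] by simp
qed

lemma harmonic_vector_pos_on_C:
  assumes pat: "component_pattern V C K M" and dom: "dominant_block K C M"
    and x: "harmonic_vector V K C M x"
  shows "0 < spec_rad C M" "\<forall>v\<in>C. 0 < x v"
proof -
  have x0: "\<forall>w\<in>V - K. x w = 0" and eig: "\<forall>v\<in>V. (\<Sum>w\<in>V. M v w * x w) = spec_rad C M * x v"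
    using x by (auto simp: harmonic_vector_def)
  have "\<exists>c\<in>C. x c \<noteq> 0"
  proof (rule ccontr)
    assume "\<not> ?thesis"
    then have "\<forall>v\<in>V. x v = 0" using eigvec_zero_if_zero_on_C[OF dom x0 _ eig] by simp
    then have "(\<Sum>v\<in>V. x v) = 0" by simp
    then show False using x by (simp add: harmonic_vector_def)
  qed
  moreover have "\<forall>v\<in>C. \<forall>w\<in>C. 0 < M v w" using pat by (simp add: component_pattern_def)
  moreover have "\<forall>v\<in>C. 0 \<le> x v" using x by (simp add: harmonic_vector_def)
  ultimately show "0 < spec_rad C M" "\<forall>v\<in>C. 0 < x v"
    using positive_matrix_nonneg_eigvec_pos[OF finite_C _ _ _ eigvec_on_C[OF pat x0 eig]] by blast+
qed

lemma harmonic_eigvec_unique: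
  assumes pat: "component_pattern V C K M" and dom: "dominant_block K C M"
    and x: "harmonic_vector V K C M x"
    and y0: "\<forall>w\<in>V - K. y w = 0" and ey: "\<forall>v\<in>V. (\<Sum>w\<in>V. M v w * y w) = spec_rad C M * y v"
  shows "\<exists>a. \<forall>v\<in>V. y v = a * x v"
proof -
  have x0: "\<forall>w\<in>V - K. x w = 0" and ex: "\<forall>v\<in>V. (\<Sum>w\<in>V. M v w * x w) = spec_rad C M * x v"
    using x by (auto simp: harmonic_vector_def)
  have "\<forall>v\<in>C. \<forall>w\<in>C. 0 < M v w" using pat by (simp add: component_pattern_def)
  then obtain a where a: "\<forall>v\<in>C. y v = a * x v"
    using positive_matrix_eigvec_unique[OF finite_C _ harmonic_vector_pos_on_C(2)[OF pat dom x]
        eigvec_on_C[OF pat x0 ex] eigvec_on_C[OF pat y0 ey]] by blast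
  define z where "z w = y w - a * x w" for w
  have "\<forall>v\<in>V. (\<Sum>w\<in>V. M v w * z w) = spec_rad C M * z v"
  proof
    fix v assume "v \<in> V"
    have "(\<Sum>w\<in>V. M v w * z w) = (\<Sum>w\<in>V. M v w * y w) - a * (\<Sum>w\<in>V. M v w * x w)"
      by (simp add: z_def right_diff_distrib sum_subtractf sum_distrib_left mult.left_commute)
    then show "(\<Sum>w\<in>V. M v w * z w) = spec_rad C M * z v"
      using ex ey \<open>v \<in> V\<close> by (simp add: z_def algebra_simps)
  qed
  then have "\<forall>v\<in>V. z v = 0"
    by (rule eigvec_zero_if_zero_on_C[OF dom, rotated 2]) (use x0 y0 a in \<open>auto simp: z_def\<close>)
  then show ?thesis by (auto simp: z_def)
qed

lemma harmonic_vector_commuting: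
  assumes patM: "component_pattern V C K M" and patG: "component_pattern V C K G"
    and comm: "\<forall>v\<in>V. \<forall>w\<in>V. (\<Sum>u\<in>V. M v u * G u w) = (\<Sum>u\<in>V. G v u * M u w)"
    and dom: "dominant_block K C M" and x: "harmonic_vector V K C M x"
  shows "harmonic_vector V K C G x"
proof -
  have x0: "\<forall>w\<in>V - K. x w = 0" and ex: "\<forall>v\<in>V. (\<Sum>w\<in>V. M v w * x w) = spec_rad C M * x v"
    using x by (auto simp: harmonic_vector_def)
  define y where "y v = (\<Sum>w\<in>V. G v w * x w)" for v
  have "\<forall>w\<in>V - K. y w = 0" using row_sum_off_K[OF patG x0] by (simp add: y_def)
  moreover have "\<forall>v\<in>V. (\<Sum>w\<in>V. M v w * y w) = spec_rad C M * y v"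
    using commuting_matrix_preserves_eigvec[OF comm ex] by (simp add: y_def)
  ultimately obtain a where a: "\<forall>v\<in>V. y v = a * x v"
    using harmonic_eigvec_unique[OF patM dom x] by blast
  then have "\<forall>v\<in>C. (\<Sum>w\<in>C. G v w * x w) = a * x v"
    by (intro eigvec_on_C[OF patG x0]) (simp add: y_def)
  moreover have "\<forall>v\<in>C. \<forall>w\<in>C. 0 \<le> G v w"
    using patG unfolding component_pattern_def by (meson less_imp_le)
  ultimately have "spec_rad C G = a"
    using spec_rad_eq_positive_eigval[OF finite_C C_ne _ harmonic_vector_pos_on_C(2)[OF patM dom x]]
    by blast
  then show ?thesis using x a unfolding harmonic_vector_def y_def by simp
qed

lemma perron_vector_on_C:
  assumes pat: "component_pattern V C K M"
  obtains x where "prob_vector C x" "\<forall>v\<in>C. 0 < x v"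
    "\<forall>v\<in>C. (\<Sum>w\<in>C. M v w * x w) = spec_rad C M * x v"
proof -
  have pos: "\<forall>v\<in>C. \<forall>w\<in>C. 0 < M v w" using pat by (simp add: component_pattern_def)
  then have nn: "\<forall>v\<in>C. \<forall>w\<in>C. 0 \<le> M v w" by (simp add: less_imp_le)
  have "prob_vector C (\<lambda>_. 1 / real (card C))"
    using finite_C C_ne by (simp add: prob_vector_def)
  moreover have "\<forall>v\<in>C. 0 * (1 / real (card C)) \<le> (\<Sum>w\<in>C. M v w * (1 / real (card C)))"
    using nn by (simp add: sum_nonneg)
  ultimately obtain x c where x: "prob_vector C x" "0 \<le> c" "\<forall>v\<in>C. (\<Sum>w\<in>C. M v w * x w) = c * x v"
    by (rule nonneg_matrix_perron_vector[OF finite_C nn])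
  have "\<forall>v\<in>C. 0 < x v"
    using positive_matrix_nonneg_eigvec_pos(2)[OF finite_C pos _ prob_vector_nonzero[OF x(1)] x(3)] x(1)
    by (simp add: prob_vector_def)
  moreover have "spec_rad C M = c"
    using spec_rad_eq_positive_eigval[OF finite_C C_ne nn calculation x(3)] .
  ultimately show thesis using x(3) by (intro that[OF x(1)]) simp_all
qed

lemma dominant_eigval_on_K:
  assumes pat: "component_pattern V C K M" and dom: "dominant_block K C M"
    and x: "prob_vector K x" and s: "spec_rad C M \<le> s"
    and eig: "\<forall>v\<in>K. (\<Sum>w\<in>K. M v w * x w) = s * x v"
  shows "s = spec_rad C M"
proof -
  have split: "(\<Sum>w\<in>K. M v w * x w) = (\<Sum>w\<in>C. M v w * x w) + (\<Sum>w\<in>K - C. M v w * x w)" for v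
    using sum.subset_diff[OF C_sub_K finite_K, of "\<lambda>w. M v w * x w"] by (simp add: add.commute)
  show ?thesis
  proof (cases "\<exists>c\<in>C. x c \<noteq> 0")
    case True
    have "\<forall>v\<in>C. (\<Sum>w\<in>C. M v w * x w) = s * x v"
    proof
      fix v assume "v \<in> C"
      then have "(\<Sum>w\<in>K - C. M v w * x w) = 0" "v \<in> K"
        using pat C_sub_K by (auto simp: component_pattern_def)
      then show "(\<Sum>w\<in>C. M v w * x w) = s * x v" using eig split[of v] by simp
    qed
    then have "\<bar>s\<bar> \<le> spec_rad C M" using real_eigval_abs_le_spec_rad[OF finite_C True] by blast
    then show ?thesis using s by simp
  next
    case False
    then have "\<forall>v\<in>K - C. (\<Sum>w\<in>K - C. M v w * x w) = s * x v"
      using eig split by simp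
    then have "\<forall>v\<in>K - C. x v = 0" using dominant_no_eigvec_on_K_minus_C[OF dom s] by blast
    then have "(\<Sum>v\<in>K. x v) = 0" using False by (intro sum.neutral) auto
    then show ?thesis using x by (simp add: prob_vector_def)
  qed
qed

lemma harmonic_vector_extend:
  assumes pat: "component_pattern V C K M" and x: "prob_vector K x"
    and eig: "\<forall>v\<in>K. (\<Sum>w\<in>K. M v w * x w) = spec_rad C M * x v"
  shows "harmonic_vector V K C M (\<lambda>v. if v \<in> K then x v else 0)"
  unfolding harmonic_vector_def
proof (intro conjI ballI allI impI)
  let ?x = "\<lambda>v. if v \<in> K then x v else 0"
  have sum_x: "(\<Sum>w\<in>V. f w * ?x w) = (\<Sum>w\<in>K. f w * x w)" for f
    by (rule sum.mono_neutral_cong_right[OF finite_V K_sub_V]) auto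
  show "(\<Sum>v\<in>V. ?x v) = 1" using sum_x[of "\<lambda>_. 1"] x by (simp add: prob_vector_def)
  fix v
  show "v \<notin> V \<Longrightarrow> ?x v = 0" "0 \<le> ?x v" "v \<in> V \<Longrightarrow> v \<notin> K \<Longrightarrow> ?x v = 0"
    using x K_sub_V by (auto simp: prob_vector_def)
  assume "v \<in> V"
  show "(\<Sum>w\<in>V. M v w * ?x w) = spec_rad C M * ?x v"
  proof (cases "v \<in> K")
    case True
    then show ?thesis using sum_x[of "M v"] eig by simp
  next
    case False
    then show ?thesis using row_sum_off_K[OF pat _, of ?x v] \<open>v \<in> V\<close> by simp
  qed
qed

lemma harmonic_vector_exists:
  assumes pat: "component_pattern V C K M" and dom: "dominant_block K C M"
  obtains x where "harmonic_vector V K C M x"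
proof -
  let ?\<rho> = "spec_rad C M"
  obtain x0 where x0: "prob_vector C x0" "\<forall>v\<in>C. 0 < x0 v"
    "\<forall>v\<in>C. (\<Sum>w\<in>C. M v w * x0 w) = ?\<rho> * x0 v"
    by (rule perron_vector_on_C[OF pat])
  \<comment> \<open>extending x0 by zero gives a subinvariant vector for M on K at level rho\<close>
  define u where "u v = (if v \<in> C then x0 v else 0)" for v
  have sum_u: "(\<Sum>w\<in>K. f w * u w) = (\<Sum>w\<in>C. f w * x0 w)" for f
    by (rule sum.mono_neutral_cong_right[OF finite_K C_sub_K]) (auto simp: u_def)
  have nn: "\<forall>v\<in>K. \<forall>w\<in>K. 0 \<le> M v w"
    using pat K_sub_V unfolding component_pattern_def by blast
  have "prob_vector K u"
    using x0(1) sum_u[of "\<lambda>_. 1"] by (auto simp: prob_vector_def u_def)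
  moreover have "\<forall>v\<in>K. ?\<rho> * u v \<le> (\<Sum>w\<in>K. M v w * u w)"
  proof
    fix v assume v: "v \<in> K"
    have "0 \<le> M v w * x0 w" if "w \<in> C" for w
      using nn v that C_sub_K x0(2) by (meson less_imp_le mult_nonneg_nonneg subsetD)
    then show "?\<rho> * u v \<le> (\<Sum>w\<in>K. M v w * u w)"
      using sum_u[of "M v"] x0(3) by (cases "v \<in> C") (auto simp: u_def intro: sum_nonneg)
  qed
  ultimately obtain x1 s where x1: "prob_vector K x1" "?\<rho> \<le> s"
    "\<forall>v\<in>K. (\<Sum>w\<in>K. M v w * x1 w) = s * x1 v"
    by (rule nonneg_matrix_perron_vector[OF finite_K nn])
  have "s = ?\<rho>" by (rule dominant_eigval_on_K[OF pat dom x1])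
  then show thesis using harmonic_vector_extend[OF pat x1(1)] x1(3) that by blast
qed

lemma row_into_C_pos:
  assumes pat: "component_pattern V C K M" and v: "v \<in> K - C"
    and xn: "\<forall>w\<in>C. 0 \<le> x w" and xp: "\<forall>c\<in>C. 0 < x c"
  shows "0 < (\<Sum>w\<in>C. M v w * x w)"
proof -
  obtain c where c: "c \<in> C" "0 < M v c" using pat v unfolding component_pattern_def by blast
  have "0 \<le> M v w * x w" if "w \<in> C" for w
  proof -
    have "0 \<le> M v w" using pat v that C_sub_K K_sub_V unfolding component_pattern_def by blast
    then show ?thesis using xn that by simp
  qed
  then have "M v c * x c \<le> (\<Sum>w\<in>C. M v w * x w)" using c by (intro member_le_sum finite_C) auto
  moreover have "0 < M v c * x c" using c xp by simp
  ultimately show ?thesis by linarith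
qed

lemma harmonic_vector_pos_on_K:
  assumes pat: "component_pattern V C K M" and dom: "dominant_block K C M"
    and x: "harmonic_vector V K C M x"
  shows "\<forall>v\<in>K. 0 < x v"
proof
  fix v assume v: "v \<in> K"
  have pos_C: "0 < spec_rad C M" "\<forall>v\<in>C. 0 < x v" using harmonic_vector_pos_on_C[OF pat dom x] by auto
  show "0 < x v"
  proof (cases "v \<in> C")
    case False
    have xn: "\<forall>w. 0 \<le> x w" and x0: "\<forall>w\<in>V - K. x w = 0" using x by (auto simp: harmonic_vector_def)
    have "0 \<le> M v w * x w" if "w \<in> K - C" for w
    proof -
      have "0 \<le> M v w" using pat v that K_sub_V unfolding component_pattern_def by blast
      then show ?thesis using xn by simp
    qed
    then have "0 \<le> (\<Sum>w\<in>K - C. M v w * x w)" by (rule sum_nonneg)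
    moreover have "spec_rad C M * x v = (\<Sum>w\<in>C. M v w * x w) + (\<Sum>w\<in>K - C. M v w * x w)"
      using x v K_sub_V sum_V_split[of "\<lambda>w. M v w * x w"] x0 by (auto simp: harmonic_vector_def)
    moreover have "0 < (\<Sum>w\<in>C. M v w * x w)"
      using row_into_C_pos[OF pat _ _ pos_C(2)] v False xn by blast
    ultimately have "0 < spec_rad C M * x v" by linarith
    then show ?thesis using pos_C(1) by (simp add: zero_less_mult_iff)
  qed (use pos_C in blast)
qed

lemma dominant_block_commuting:
  assumes patM: "component_pattern V C K M" and patG: "component_pattern V C K G"
    and comm: "\<forall>v\<in>V. \<forall>w\<in>V. (\<Sum>u\<in>V. M v u * G u w) = (\<Sum>u\<in>V. G v u * M u w)"
    and dom: "dominant_block K C M"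
  shows "dominant_block K C G"
proof (cases "K - C = {}")
  case False
  obtain x where x: "harmonic_vector V K C M x" by (rule harmonic_vector_exists[OF patM dom])
  have xG: "harmonic_vector V K C G x" by (rule harmonic_vector_commuting[OF patM patG comm dom x])
  have x_pos: "\<forall>v\<in>K. 0 < x v" by (rule harmonic_vector_pos_on_K[OF patM dom x])
  \<comment> \<open>x is a positive vector on K - C that G^{K-C} strictly contracts, by the edges into C\<close>
  have "\<forall>v\<in>K - C. (\<Sum>w\<in>K - C. G v w * x w) < spec_rad C G * x v"
  proof
    fix v assume v: "v \<in> K - C"
    have "\<forall>w\<in>C. 0 \<le> x w" "\<forall>c\<in>C. 0 < x c" using x x_pos C_sub_K by (auto simp: harmonic_vector_def)
    then have "0 < (\<Sum>w\<in>C. G v w * x w)" by (rule row_into_C_pos[OF patG v])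
    moreover have "spec_rad C G * x v = (\<Sum>w\<in>C. G v w * x w) + (\<Sum>w\<in>K - C. G v w * x w)"
      using xG v K_sub_V sum_V_split[of "\<lambda>w. G v w * x w"] by (auto simp: harmonic_vector_def)
    ultimately show "(\<Sum>w\<in>K - C. G v w * x w) < spec_rad C G * x v" by linarith
  qed
  moreover have "\<forall>v\<in>K - C. \<forall>w\<in>K - C. 0 \<le> G v w"
    using patG K_sub_V unfolding component_pattern_def by blast
  ultimately have "spec_rad (K - C) G < spec_rad C G"
    using spec_rad_less_collatz[OF finite_K_minus_C False] x_pos by blast
  then show ?thesis by (simp add: dominant_block_def)
qed (simp add: dominant_block_def)

end

section \<open>Products and sums of vertex matrices\<close>

definition commute_on :: "'a set \<Rightarrow> ('a \<Rightarrow> 'a \<Rightarrow> real) \<Rightarrow> ('a \<Rightarrow> 'a \<Rightarrow> real) \<Rightarrow> bool" where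
  "commute_on V X Y \<longleftrightarrow> (\<forall>v\<in>V. \<forall>w\<in>V. mmult V X Y v w = mmult V Y X v w)"

lemma commute_on_sym: "commute_on V X Y \<Longrightarrow> commute_on V Y X"
  by (simp add: commute_on_def)

lemma mmult_assoc: "mmult V (mmult V X Y) Z = mmult V X (mmult V Y Z)"
proof (intro ext)
  fix v w
  have "mmult V (mmult V X Y) Z v w = (\<Sum>u\<in>V. \<Sum>t\<in>V. X v t * Y t u * Z u w)"
    by (simp add: mmult_def sum_distrib_right)
  also have "\<dots> = (\<Sum>t\<in>V. \<Sum>u\<in>V. X v t * Y t u * Z u w)" by (rule sum.swap)
  also have "\<dots> = mmult V X (mmult V Y Z) v w"
    by (simp add: mmult_def sum_distrib_left mult.assoc)
  finally show "mmult V (mmult V X Y) Z v w = mmult V X (mmult V Y Z) v w" .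
qed

lemma commute_on_mmult:
  assumes "commute_on V X Y" "commute_on V X Z"
  shows "commute_on V X (mmult V Y Z)"
  unfolding commute_on_def
proof (intro ballI)
  fix v w assume v: "v \<in> V" and w: "w \<in> V"
  have "mmult V X (mmult V Y Z) v w = mmult V (mmult V Y X) Z v w"
    using assms(1) v unfolding mmult_assoc[symmetric] by (simp add: mmult_def commute_on_def)
  also have "\<dots> = mmult V Y (mmult V Z X) v w"
    using assms(2) w unfolding mmult_assoc by (simp add: mmult_def commute_on_def)
  also have "\<dots> = mmult V (mmult V Y Z) X v w" by (simp add: mmult_assoc)
  finally show "mmult V X (mmult V Y Z) v w = mmult V (mmult V Y Z) X v w" .
qed

lemma commute_on_mone:
  assumes "finite V"
  shows "commute_on V X mone"
  unfolding commute_on_def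
proof (intro ballI)
  fix v w assume "v \<in> V" "w \<in> V"
  have "mmult V X mone v w = X v w"
    using assms \<open>w \<in> V\<close> by (simp add: mmult_def mone_def if_distrib[of "(*) _"] cong: if_cong)
  also have "\<dots> = mmult V mone X v w"
    using assms \<open>v \<in> V\<close> by (simp add: mmult_def mone_def if_distrib[of "\<lambda>a. a * _"] cong: if_cong)
  finally show "mmult V X mone v w = mmult V mone X v w" .
qed

lemma commute_on_mpow: "finite V \<Longrightarrow> commute_on V X Y \<Longrightarrow> commute_on V X (mpow V Y n)"
  by (induction n) (auto intro: commute_on_mmult commute_on_mone)

lemma commute_on_foldr_mpow:
  assumes "finite V" "\<forall>i\<in>set is. commute_on V X (A i)"
  shows "commute_on V X (foldr (\<lambda>i M. mmult V (mpow V (A i) (n i)) M) is mone)"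
  using assms(2) by (induction "is") (auto intro!: commute_on_mmult commute_on_mpow commute_on_mone assms(1))

lemma mmult_sum_list_left:
  "mmult V (\<lambda>v w. \<Sum>a\<leftarrow>F. X a v w) Y v w = (\<Sum>a\<leftarrow>F. mmult V (X a) Y v w)"
  by (induction F) (simp_all add: mmult_def sum.distrib distrib_right)

lemma mmult_sum_list_right:
  "mmult V Y (\<lambda>v w. \<Sum>a\<leftarrow>F. X a v w) v w = (\<Sum>a\<leftarrow>F. mmult V Y (X a) v w)"
  by (induction F) (simp_all add: mmult_def sum.distrib distrib_left)

lemma sum_list_swap: "(\<Sum>a\<leftarrow>F. \<Sum>b\<leftarrow>G. f a b) = (\<Sum>b\<leftarrow>G. \<Sum>a\<leftarrow>F. f a b :: real)"
proof (induction F)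
  case Nil
  show ?case by (induction G) simp_all
qed (simp add: sum_list_addf)

lemma commute_on_sum_list:
  assumes "\<forall>a\<in>set F. \<forall>b\<in>set G. commute_on V (P a) (P b)"
  shows "commute_on V (\<lambda>v w. \<Sum>a\<leftarrow>F. P a v w) (\<lambda>v w. \<Sum>b\<leftarrow>G. P b v w)"
  unfolding commute_on_def
proof (intro ballI)
  fix v w assume "v \<in> V" "w \<in> V"
  have "mmult V (\<lambda>v w. \<Sum>a\<leftarrow>F. P a v w) (\<lambda>v w. \<Sum>b\<leftarrow>G. P b v w) v w
      = (\<Sum>a\<leftarrow>F. \<Sum>b\<leftarrow>G. mmult V (P a) (P b) v w)"
    by (simp add: mmult_sum_list_left mmult_sum_list_right)
  also have "\<dots> = (\<Sum>a\<leftarrow>F. \<Sum>b\<leftarrow>G. mmult V (P b) (P a) v w)"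
    using assms \<open>v \<in> V\<close> \<open>w \<in> V\<close> unfolding commute_on_def
    by (intro arg_cong[of _ _ sum_list] map_cong refl) auto
  also have "\<dots> = (\<Sum>b\<leftarrow>G. \<Sum>a\<leftarrow>F. mmult V (P b) (P a) v w)" by (rule sum_list_swap)
  also have "\<dots> = mmult V (\<lambda>v w. \<Sum>b\<leftarrow>G. P b v w) (\<lambda>v w. \<Sum>a\<leftarrow>F. P a v w) v w"
    by (simp add: mmult_sum_list_left mmult_sum_list_right)
  finally show "mmult V (\<lambda>v w. \<Sum>a\<leftarrow>F. P a v w) (\<lambda>v w. \<Sum>b\<leftarrow>G. P b v w) v w
      = mmult V (\<lambda>v w. \<Sum>b\<leftarrow>G. P b v w) (\<lambda>v w. \<Sum>a\<leftarrow>F. P a v w) v w" .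
qed

lemma commute_on_AF:
  assumes "finite (verts L d)"
    and "\<forall>i j. commute_on (verts L d) (vmat L r s d i) (vmat L r s d j)"
  shows "commute_on (verts L d) (AF k L r s d F) (AF k L r s d G)"
proof -
  let ?V = "verts L d"
  have pow: "vmat_pow k L r s d a
      = foldr (\<lambda>i M. mmult ?V (mpow ?V (vmat L r s d i) (a i)) M) [0..<k] mone" for a
    by (simp add: vmat_pow_def)
  have vmat_pow: "commute_on ?V (vmat L r s d i) (vmat_pow k L r s d b)" for i b
    unfolding pow by (rule commute_on_foldr_mpow[OF assms(1)]) (use assms(2) in blast)
  have "commute_on ?V (vmat_pow k L r s d a) (vmat_pow k L r s d b)" for a b
  proof -
    have "commute_on ?V (vmat_pow k L r s d b) (vmat_pow k L r s d a)"
      unfolding pow[of a] by (rule commute_on_foldr_mpow[OF assms(1)]) (use vmat_pow commute_on_sym in blast)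
    then show ?thesis by (rule commute_on_sym)
  qed
  then show ?thesis unfolding AF_def by (intro commute_on_sum_list) blast
qed

lemma mmult_nonneg: "(\<And>v w. 0 \<le> X v w) \<Longrightarrow> (\<And>v w. 0 \<le> Y v w) \<Longrightarrow> 0 \<le> mmult V X Y v w"
  by (simp add: mmult_def sum_nonneg)

lemma mpow_nonneg: "(\<And>v w. 0 \<le> X v w) \<Longrightarrow> 0 \<le> mpow V X n v w"
  by (induction n arbitrary: v w) (simp_all add: mone_def mmult_nonneg)

lemma AF_nonneg: "0 \<le> AF k L r s d F v w"
proof -
  have "0 \<le> foldr (\<lambda>i M. mmult V (mpow V (vmat L r s d i) (a i)) M) is mone v w" for V a "is" v w
    by (induction "is" arbitrary: v w) (simp_all add: mone_def mmult_nonneg mpow_nonneg vmat_def)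
  then show ?thesis unfolding AF_def vmat_pow_def by (intro sum_list_nonneg) auto
qed

section \<open>Paths in a finite k-graph\<close>

definition paths_between ::
    "'a set \<Rightarrow> ('a \<Rightarrow> 'a) \<Rightarrow> ('a \<Rightarrow> 'a) \<Rightarrow> ('a \<Rightarrow> nat \<Rightarrow> nat) \<Rightarrow> (nat \<Rightarrow> nat) \<Rightarrow> 'a \<Rightarrow> 'a \<Rightarrow> 'a set" where
  "paths_between L r s d n v w = {l \<in> paths_deg L d n. r l = v \<and> s l = w}"

locale k_graph =
  fixes k :: nat and L :: "'a set" and r s :: "'a \<Rightarrow> 'a" and cmp :: "'a \<Rightarrow> 'a \<Rightarrow> 'a"
    and d :: "'a \<Rightarrow> nat \<Rightarrow> nat"
  assumes kgraph: "kgraph k L r s cmp d"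
begin

lemma morphism_closed: "l \<in> L \<Longrightarrow> r l \<in> L \<and> s l \<in> L \<and> d l \<in> degs k"
  using kgraph unfolding kgraph_def by (elim conjE) blast

lemma range_source_idem: "l \<in> L \<Longrightarrow> r (r l) = r l \<and> s (r l) = r l \<and> r (s l) = s l \<and> s (s l) = s l"
  using kgraph unfolding kgraph_def by (elim conjE) blast

lemma identity_laws: "l \<in> L \<Longrightarrow> cmp (r l) l = l \<and> cmp l (s l) = l"
  using kgraph unfolding kgraph_def by (elim conjE) blast

lemma comp_closed:
  "m \<in> L \<Longrightarrow> n \<in> L \<Longrightarrow> s m = r n \<Longrightarrow> cmp m n \<in> L \<and> r (cmp m n) = r m \<and> s (cmp m n) = s n"
  using kgraph unfolding kgraph_def by (elim conjE) blast

lemma degree_range: "l \<in> L \<Longrightarrow> d (r l) = (\<lambda>_. 0)"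
  using kgraph unfolding kgraph_def by (elim conjE) blast

lemma degree_comp: "m \<in> L \<Longrightarrow> n \<in> L \<Longrightarrow> s m = r n \<Longrightarrow> d (cmp m n) = (\<lambda>i. d m i + d n i)"
  using kgraph unfolding kgraph_def by (elim conjE) blast

lemma unique_factorisation:
  "l \<in> L \<Longrightarrow> d l = (\<lambda>i. m i + n i) \<Longrightarrow>
    \<exists>!p. fst p \<in> L \<and> snd p \<in> L \<and> s (fst p) = r (snd p) \<and> d (fst p) = m \<and> d (snd p) = n \<and>
      l = cmp (fst p) (snd p)"
  using kgraph unfolding kgraph_def by (elim conjE) blast

lemma degree_source: "l \<in> L \<Longrightarrow> d (s l) = (\<lambda>_. 0)"
  using degree_range[of "s l"] morphism_closed[of l] range_source_idem[of l] by simp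

lemma degree_zero_is_vertex:
  assumes l: "l \<in> L" and d0: "d l = (\<lambda>_. 0)"
  shows "r l = l \<and> s l = l"
proof -
  define P where "P p \<longleftrightarrow> fst p \<in> L \<and> snd p \<in> L \<and> s (fst p) = r (snd p) \<and>
      d (fst p) = (\<lambda>_::nat. 0::nat) \<and> d (snd p) = (\<lambda>_::nat. 0::nat) \<and> l = cmp (fst p) (snd p)"
    for p :: "'a \<times> 'a"
  have "\<exists>!p. P p" using unique_factorisation[OF l, of "\<lambda>_. 0" "\<lambda>_. 0"] d0 by (simp add: P_def)
  \<comment> \<open>both (r l, l) and (l, s l) factorise l into degrees 0 + 0\<close>
  moreover have "P (r l, l)" "P (l, s l)"
    using l d0 morphism_closed range_source_idem degree_range degree_source identity_laws
    by (auto simp: P_def)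
  ultimately have "(r l, l) = (l, s l)" by blast
  then show ?thesis by simp
qed

lemma vertex_iff: "v \<in> verts L d \<longleftrightarrow> v \<in> L \<and> d v = (\<lambda>_. 0)"
  by (simp add: verts_def paths_deg_def)

lemma vertex_range_source: "v \<in> verts L d \<Longrightarrow> r v = v \<and> s v = v"
  using degree_zero_is_vertex vertex_iff by blast

lemma source_vertex: "l \<in> L \<Longrightarrow> s l \<in> verts L d"
  using morphism_closed degree_source vertex_iff by blast

lemma composable_pairs_bij:
  fixes m n :: "nat \<Rightarrow> nat" and v w :: 'a
  defines "A \<equiv> {p. fst p \<in> L \<and> snd p \<in> L \<and> s (fst p) = r (snd p) \<and> d (fst p) = m \<and> d (snd p) = n \<and>
      r (fst p) = v \<and> s (snd p) = w}"
  shows "bij_betw (\<lambda>p. cmp (fst p) (snd p)) A (paths_between L r s d (\<lambda>i. m i + n i) v w)"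
proof (rule bij_betwI')
  fix p q assume "p \<in> A" "q \<in> A"
  moreover from \<open>p \<in> A\<close> have "cmp (fst p) (snd p) \<in> L" "d (cmp (fst p) (snd p)) = (\<lambda>i. m i + n i)"
    using comp_closed degree_comp by (auto simp: A_def)
  ultimately show "(cmp (fst p) (snd p) = cmp (fst q) (snd q)) = (p = q)"
    using unique_factorisation[of "cmp (fst p) (snd p)" m n] by (auto simp: A_def)
next
  fix p assume "p \<in> A"
  then show "cmp (fst p) (snd p) \<in> paths_between L r s d (\<lambda>i. m i + n i) v w"
    using comp_closed degree_comp by (auto simp: A_def paths_between_def paths_deg_def)
next
  fix l assume "l \<in> paths_between L r s d (\<lambda>i. m i + n i) v w"
  then have l: "l \<in> L" "d l = (\<lambda>i. m i + n i)" "r l = v" "s l = w"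
    by (auto simp: paths_between_def paths_deg_def)
  then obtain p where p: "fst p \<in> L" "snd p \<in> L" "s (fst p) = r (snd p)" "d (fst p) = m"
      "d (snd p) = n" "l = cmp (fst p) (snd p)"
    using unique_factorisation by blast
  then have "p \<in> A" using comp_closed l by (auto simp: A_def)
  then show "\<exists>p\<in>A. l = cmp (fst p) (snd p)" using p(6) by blast
qed

lemma composable_pairs_eq_UN:
  "{p. fst p \<in> L \<and> snd p \<in> L \<and> s (fst p) = r (snd p) \<and> d (fst p) = m \<and> d (snd p) = n \<and>
      r (fst p) = v \<and> s (snd p) = w}
   = (\<Union>u\<in>verts L d. paths_between L r s d m v u \<times> paths_between L r s d n u w)"
  using source_vertex by (fastforce simp: paths_between_def paths_deg_def)

lemma vle_trans: "vle L r s a b \<Longrightarrow> vle L r s b c \<Longrightarrow> vle L r s a c"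
  unfolding vle_def using comp_closed by metis

lemma vle_refl: "v \<in> verts L d \<Longrightarrow> vle L r s v v"
  unfolding vle_def using vertex_iff vertex_range_source by blast

lemma degree_nonzero_if_distinct: "p \<in> L \<Longrightarrow> r p \<noteq> s p \<Longrightarrow> d p \<noteq> (\<lambda>_. 0)"
  using degree_zero_is_vertex by metis

lemma degree_nonzero_comp:
  "m \<in> L \<Longrightarrow> n \<in> L \<Longrightarrow> s m = r n \<Longrightarrow> d m \<noteq> (\<lambda>_. 0) \<or> d n \<noteq> (\<lambda>_. 0) \<Longrightarrow> d (cmp m n) \<noteq> (\<lambda>_. 0)"
  using degree_comp[of m n] by (auto simp: fun_eq_iff)

lemma AF_pos_iff:
  assumes "well_chosen k L r s d F" "v \<in> verts L d" "w \<in> verts L d"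
  shows "0 < AF k L r s d F v w \<longleftrightarrow> (\<exists>p\<in>L. r p = v \<and> s p = w \<and> d p \<noteq> (\<lambda>_. 0))"
  using assms morphism_closed unfolding well_chosen_def paths_deg_def by blast

lemma AF_zero_if_no_path:
  assumes "well_chosen k L r s d F" "v \<in> verts L d" "w \<in> verts L d" "\<not> vle L r s v w"
  shows "AF k L r s d F v w = 0"
  using AF_pos_iff[OF assms(1-3)] AF_nonneg[of k L r s d F v w] assms(4)
  unfolding vle_def by force

lemma closure_sub_verts: "vclosure L r s d V \<subseteq> verts L d"
  by (auto simp: vclosure_def)

lemma closure_upward:
  assumes "v \<in> verts L d" "vle L r s v w" "w \<in> vclosure L r s d V"
  shows "v \<in> vclosure L r s d V"
proof -
  obtain p where p: "p \<in> L" "r p = v" "s p = w" using assms(2) by (auto simp: vle_def)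
  obtain l where l: "l \<in> L" "r l = w" "s l \<in> V" using assms(3) by (auto simp: vclosure_def)
  have "cmp p l \<in> L" "r (cmp p l) = v" "s (cmp p l) \<in> V" using comp_closed[OF p(1) l(1)] p l by auto
  then show ?thesis using assms(1) by (auto simp: vclosure_def)
qed

context
  fixes C :: "'a set"
  assumes C: "is_component L r s d C"
begin

lemma component_sub_verts: "C \<subseteq> verts L d"
  using C unfolding is_component_def by blast

lemma component_nonempty: "C \<noteq> {}"
  using C vle_refl unfolding is_component_def vsim_def by blast

lemma component_vle: "a \<in> C \<Longrightarrow> b \<in> C \<Longrightarrow> vle L r s a b"
  using C vle_trans unfolding is_component_def vsim_def by blast

lemma component_convex:
  "a \<in> C \<Longrightarrow> b \<in> C \<Longrightarrow> w \<in> verts L d \<Longrightarrow> vle L r s a w \<Longrightarrow> vle L r s w b \<Longrightarrow> w \<in> C"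
  using C vle_trans unfolding is_component_def vsim_def by blast

lemma component_loop:
  assumes nt: "\<not> trivial_comp L r s C" and v: "v \<in> C"
  obtains p where "p \<in> L" "r p = v" "s p = v" "d p \<noteq> (\<lambda>_. 0)"
proof -
  have "v \<in> L" "r v = v" "s v = v"
    using v component_sub_verts vertex_iff vertex_range_source by auto
  then have "v \<in> {l\<in>L. r l \<in> C \<and> s l \<in> C}" using v by simp
  then obtain l where l: "l \<in> L" "r l \<in> C" "s l \<in> C" "l \<noteq> v"
    using nt unfolding trivial_comp_def by blast
  \<comment> \<open>close l up to a loop at v through the component; it has nonzero degree
    because l is either a non-vertex or a vertex different from v\<close>
  obtain m where m: "m \<in> L" "r m = v" "s m = r l" using component_vle[OF v l(2)] by (auto simp: vle_def)
  obtain n where n: "n \<in> L" "r n = s l" "s n = v" using component_vle[OF l(3) v] by (auto simp: vle_def)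
  have ln: "cmp l n \<in> L" "r (cmp l n) = r l" "s (cmp l n) = v" using comp_closed[OF l(1) n(1)] n by auto
  have "d l \<noteq> (\<lambda>_. 0) \<or> d m \<noteq> (\<lambda>_. 0)"
    using degree_zero_is_vertex[OF l(1)] degree_nonzero_if_distinct[OF m(1)] m l(4) by force
  then have "d (cmp l n) \<noteq> (\<lambda>_. 0) \<or> d m \<noteq> (\<lambda>_. 0)"
    using degree_nonzero_comp[OF l(1) n(1)] n by auto
  then have "d (cmp m (cmp l n)) \<noteq> (\<lambda>_. 0)"
    using degree_nonzero_comp[OF m(1) ln(1)] m ln by auto
  moreover have "cmp m (cmp l n) \<in> L" "r (cmp m (cmp l n)) = v" "s (cmp m (cmp l n)) = v"
    using comp_closed[OF m(1) ln(1)] m ln by auto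
  ultimately show thesis by (rule that[rotated -1])
qed

lemma component_sub_closure: "C \<subseteq> vclosure L r s d C"
  using component_sub_verts vertex_iff vertex_range_source by (fastforce simp: vclosure_def)

lemma AF_component_pattern:
  assumes wc: "well_chosen k L r s d F" and nt: "\<not> trivial_comp L r s C"
  shows "component_pattern (verts L d) C (vclosure L r s d C) (AF k L r s d F)"
  unfolding component_pattern_def
proof (intro conjI ballI)
  let ?K = "vclosure L r s d C"
  have CV: "v \<in> C \<Longrightarrow> v \<in> verts L d" for v using component_sub_verts by blast
  fix v w
  show "0 \<le> AF k L r s d F v w" by (rule AF_nonneg)
  show "0 < AF k L r s d F v w" if vw: "v \<in> C" "w \<in> C"
  proof (cases "v = w")
    case True
    then show ?thesis using AF_pos_iff[OF wc CV CV] component_loop[OF nt] vw by metis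
  next
    case False
    obtain p where "p \<in> L" "r p = v" "s p = w" using component_vle[OF vw] by (auto simp: vle_def)
    then show ?thesis using AF_pos_iff[OF wc CV CV] degree_nonzero_if_distinct False vw by metis
  qed
  show "AF k L r s d F v w = 0" if "v \<in> verts L d - ?K" "w \<in> ?K"
    using that closure_upward closure_sub_verts[of C] by (intro AF_zero_if_no_path[OF wc]) auto
  show "AF k L r s d F v w = 0" if vC: "v \<in> C" and wK: "w \<in> ?K - C"
  proof (rule AF_zero_if_no_path[OF wc CV[OF vC]])
    show "w \<in> verts L d" using wK closure_sub_verts[of C] by auto
    obtain l where "l \<in> L" "r l = w" "s l \<in> C" using wK by (auto simp: vclosure_def)
    then have "vle L r s w (s l)" by (auto simp: vle_def)
    then show "\<not> vle L r s v w"
      using component_convex[OF vC \<open>s l \<in> C\<close> \<open>w \<in> verts L d\<close>] wK by blast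
  qed
  show "\<exists>c\<in>C. 0 < AF k L r s d F v c" if vK: "v \<in> ?K - C"
  proof -
    obtain l where l: "l \<in> L" "r l = v" "s l \<in> C" "v \<in> verts L d" using vK by (auto simp: vclosure_def)
    then have "r l \<noteq> s l" using vK by auto
    then have "d l \<noteq> (\<lambda>_. 0)" using degree_nonzero_if_distinct[OF l(1)] by blast
    then show ?thesis using AF_pos_iff[OF wc l(4) CV[OF l(3)]] l by blast
  qed
qed

end

end

locale finite_k_graph = k_graph +
  assumes finite: "finite_kgraph L d"
begin

lemma finite_verts: "finite (verts L d)"
  using finite by (simp add: finite_kgraph_def verts_def)

lemma finite_paths_between: "finite (paths_between L r s d n v w)"
  using finite by (simp add: finite_kgraph_def paths_between_def)

lemma sum_card_paths_comp:
  "(\<Sum>u\<in>verts L d. card (paths_between L r s d m v u) * card (paths_between L r s d n u w))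
    = card (paths_between L r s d (\<lambda>i. m i + n i) v w)"
proof -
  have "(\<Sum>u\<in>verts L d. card (paths_between L r s d m v u) * card (paths_between L r s d n u w))
      = card (\<Union>u\<in>verts L d. paths_between L r s d m v u \<times> paths_between L r s d n u w)"
    by (subst card_UN_disjoint)
      (auto simp: finite_verts finite_paths_between card_cartesian_product, auto simp: paths_between_def)
  also have "\<dots> = card (paths_between L r s d (\<lambda>i. m i + n i) v w)"
    using bij_betw_same_card[OF composable_pairs_bij] by (simp add: composable_pairs_eq_UN)
  finally show ?thesis .
qed

lemma vmat_mult_commute:
  "mmult (verts L d) (vmat L r s d i) (vmat L r s d j) v w
    = mmult (verts L d) (vmat L r s d j) (vmat L r s d i) v w"
proof -
  have "mmult (verts L d) (vmat L r s d i) (vmat L r s d j) v w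
      = real (card (paths_between L r s d (\<lambda>x. unitdeg i x + unitdeg j x) v w))" for i j
    unfolding mmult_def vmat_def sum_card_paths_comp[symmetric]
    by (simp add: paths_between_def)
  moreover have "(\<lambda>x. unitdeg i x + unitdeg j x) = (\<lambda>x. unitdeg j x + unitdeg i x)"
    by (simp add: add.commute)
  ultimately show ?thesis by metis
qed

lemma AF_commute:
  "\<forall>v\<in>verts L d. \<forall>w\<in>verts L d.
    (\<Sum>u\<in>verts L d. AF k L r s d F v u * AF k L r s d G u w)
      = (\<Sum>u\<in>verts L d. AF k L r s d G v u * AF k L r s d F u w)"
  using commute_on_AF[OF finite_verts] vmat_mult_commute
  unfolding commute_on_def mmult_def by blast

end

theorem corollary7p10:
  fixes k :: nat and L :: "'a set" and r s :: "'a \<Rightarrow> 'a"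
    and cmp :: "'a \<Rightarrow> 'a \<Rightarrow> 'a" and d :: "'a \<Rightarrow> nat \<Rightarrow> nat"
    and C :: "'a set" and F F' :: "(nat \<Rightarrow> nat) list"
  assumes "kgraph k L r s cmp d"
    and "finite_kgraph L d"
    and "no_sources k L r d"
    and "is_component L r s d C"
    and "positive_comp k L r s d C"
    and "well_chosen k L r s d F"
    and "harmonic k L r s d F C"
    and "well_chosen k L r s d F'"
  shows "harmonic k L r s d F' C \<and> harm_vec k L r s d F C = harm_vec k L r s d F' C"
proof -
  interpret finite_k_graph k L r s cmp d using assms(1,2) by unfold_locales
  let ?V = "verts L d" and ?K = "vclosure L r s d C"
  interpret nested_blocks ?V C ?K
    using finite_verts component_sub_closure[OF assms(4)] closure_sub_verts
      component_nonempty[OF assms(4)] by unfold_locales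
  have nt: "\<not> trivial_comp L r s C" using assms(7) by (simp add: harmonic_def)
  have harmonic_iff: "harmonic k L r s d H C \<longleftrightarrow> dominant_block ?K C (AF k L r s d H)" for H
    using nt by (simp add: harmonic_def dominant_block_def)
  have harm_vec_iff: "is_harm_vec k L r s d H C = harmonic_vector ?V ?K C (AF k L r s d H)" for H
    by (simp add: fun_eq_iff is_harm_vec_def harmonic_vector_def)
  note pat = AF_component_pattern[OF assms(4,6) nt] and pat' = AF_component_pattern[OF assms(4,8) nt]
  have dom: "dominant_block ?K C (AF k L r s d F)" using assms(7) harmonic_iff by blast
  then have dom': "dominant_block ?K C (AF k L r s d F')"
    by (rule dominant_block_commuting[OF pat pat' AF_commute])
  have "is_harm_vec k L r s d F C = is_harm_vec k L r s d F' C"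
    unfolding harm_vec_iff
    using harmonic_vector_commuting[OF pat pat' AF_commute dom]
      harmonic_vector_commuting[OF pat' pat AF_commute dom'] by blast
  then show ?thesis using dom' harmonic_iff by (simp add: harm_vec_def)
qed

end
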